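(* Let $H$ be a self-adjoint operator on a Hilbert space $\mathcal H$ and $U(t)=e^{itH}$. Let $\mathcal B\subset D(H)$ be a dense linear subspace invariant under all $U(t)$. Then: (i) $\mathcal B$ is a core for $H$. (ii) If $X$ is a symmetric operator with $\mathcal B\subset D(X)$, $X\mathcal B\subset D(X)$ and $X^2|_{\mathcal B}=H|_{\mathcal B}$, then $X|_{\mathcal B}$ is essentially self-adjoint, $\overline{X|_{\mathcal B}}=\overline X$, and $\overline X^2=H$. In particular $H\ge0$ and $D(H)\subset D(\overline X)$. Finally, these conclusions remain valid if instead of $U$-invariance one only assumes that $\mathcal B$ is invariant under $H$ and contains a dense set of analytic vectors for $H$.
   Context: $D(A)$ is the domain of an operator $A$ and $\overline A$ its closure. A subspace $L\subset D(A)$ of a self-adjoint operator $A$ is a core if $A$ is the closure of $A|_L$. $\overline X^2$ has domain $\{\psi\in D(\overline X):\overline X\psi\in D(\overline X)\}$. A vector $\psi$ is analytic for a symmetric operator $H$ if $\psi\in D(H^n)$ for all $n$ and $\sum_n t^n\|H^n\psi\|/n!<\infty$ for some $t>0$. *)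

theory Defs
  imports "HOL-Analysis.Analysis"
begin

text \<open>The distribution has no complex inner product spaces, so we introduce the class
of complex Hilbert spaces: a real Banach space with a compatible complex scalar
multiplication and a complex inner product (antilinear in the first argument)
inducing the norm.\<close>

class chilbert = banach +
  fixes scaleC :: "complex \<Rightarrow> 'a \<Rightarrow> 'a" (infixr \<open>*\<^sub>C\<close> 75)
    and cinner :: "'a \<Rightarrow> 'a \<Rightarrow> complex"
  assumes scaleC_add_right: "a *\<^sub>C (x + y) = a *\<^sub>C x + a *\<^sub>C y"
    and scaleC_add_left: "(a + b) *\<^sub>C x = a *\<^sub>C x + b *\<^sub>C x"
    and scaleC_scaleC: "a *\<^sub>C (b *\<^sub>C x) = (a * b) *\<^sub>C x"
    and scaleC_one: "1 *\<^sub>C x = x"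
    and scaleR_scaleC: "scaleR r x = of_real r *\<^sub>C x"
    and cinner_add_left: "cinner (x + y) z = cinner x z + cinner y z"
    and cinner_scaleC_left: "cinner (a *\<^sub>C x) y = cnj a * cinner x y"
    and cinner_commute: "cinner x y = cnj (cinner y x)"
    and cinner_pos: "x \<noteq> 0 \<Longrightarrow> 0 < Re (cinner x x)"
    and norm_eq_sqrt_cinner: "norm x = sqrt (Re (cinner x x))"

type_synonym 'a lop = "'a \<Rightarrow> 'a option"

definition app :: "'a lop \<Rightarrow> 'a \<Rightarrow> 'a" where
  "app A x = the (A x)"

definition csubspace :: "'a::chilbert set \<Rightarrow> bool" where
  "csubspace S \<longleftrightarrow> 0 \<in> S \<and> (\<forall>x\<in>S. \<forall>y\<in>S. x + y \<in> S) \<and> (\<forall>c. \<forall>x\<in>S. c *\<^sub>C x \<in> S)"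

definition dense_set :: "'a::chilbert set \<Rightarrow> bool" where
  "dense_set S \<longleftrightarrow> closure S = UNIV"

definition linear_op :: "'a::chilbert lop \<Rightarrow> bool" where
  "linear_op A \<longleftrightarrow> csubspace (dom A) \<and>
     (\<forall>x\<in>dom A. \<forall>y\<in>dom A. app A (x + y) = app A x + app A y) \<and>
     (\<forall>c. \<forall>x\<in>dom A. app A (c *\<^sub>C x) = c *\<^sub>C app A x)"

definition densely_defined :: "'a::chilbert lop \<Rightarrow> bool" where
  "densely_defined A \<longleftrightarrow> linear_op A \<and> dense_set (dom A)"

definition graph_op :: "'a lop \<Rightarrow> ('a \<times> 'a) set" where
  "graph_op A = {(x, y). A x = Some y}"

definition closable :: "'a::chilbert lop \<Rightarrow> bool" where
  "closable A \<longleftrightarrow> (\<forall>y. (0, y) \<in> closure (graph_op A) \<longrightarrow> y = 0)"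

definition closure_op :: "'a::chilbert lop \<Rightarrow> 'a lop" where
  "closure_op A x = (if \<exists>y. (x, y) \<in> closure (graph_op A)
                     then Some (THE y. (x, y) \<in> closure (graph_op A)) else None)"

text \<open>Adjoint (meaningful for densely defined A).\<close>
definition adjoint_op :: "'a::chilbert lop \<Rightarrow> 'a lop" where
  "adjoint_op A y = (if \<exists>z. \<forall>x\<in>dom A. cinner (app A x) y = cinner x z
                     then Some (THE z. \<forall>x\<in>dom A. cinner (app A x) y = cinner x z) else None)"

definition symmetric_op :: "'a::chilbert lop \<Rightarrow> bool" where
  "symmetric_op A \<longleftrightarrow> densely_defined A \<and>
     (\<forall>x\<in>dom A. \<forall>y\<in>dom A. cinner (app A x) y = cinner x (app A y))"

definition self_adjoint :: "'a::chilbert lop \<Rightarrow> bool" where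
  "self_adjoint A \<longleftrightarrow> densely_defined A \<and> adjoint_op A = A"

definition ess_self_adjoint :: "'a::chilbert lop \<Rightarrow> bool" where
  "ess_self_adjoint A \<longleftrightarrow> closable A \<and> self_adjoint (closure_op A)"

definition is_core :: "'a::chilbert lop \<Rightarrow> 'a set \<Rightarrow> bool" where
  "is_core A L \<longleftrightarrow> L \<subseteq> dom A \<and> closure_op (A |` L) = A"

definition nonneg_op :: "'a::chilbert lop \<Rightarrow> bool" where
  "nonneg_op A \<longleftrightarrow> (\<forall>x\<in>dom A. cinner x (app A x) \<in> \<real> \<and> 0 \<le> Re (cinner x (app A x)))"

primrec op_pow :: "'a lop \<Rightarrow> nat \<Rightarrow> 'a lop" where
  "op_pow A 0 = Some"
| "op_pow A (Suc n) = A \<circ>\<^sub>m op_pow A n"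

definition analytic_vector :: "'a::chilbert lop \<Rightarrow> 'a \<Rightarrow> bool" where
  "analytic_vector A x \<longleftrightarrow> (\<forall>n. x \<in> dom (op_pow A n)) \<and>
     (\<exists>t>0. summable (\<lambda>n. t ^ n * norm (app (op_pow A n) x) / fact n))"

text \<open>U(t) = e^{itH}: U is a strongly continuous one-parameter group of unitaries whose
generator is iH, i.e. D(H) is exactly the set of x for which t \<mapsto> U t x is differentiable
at 0, and the derivative there is i H x (Stone's theorem).\<close>
definition unitary_group_of :: "'a::chilbert lop \<Rightarrow> (real \<Rightarrow> 'a \<Rightarrow> 'a) \<Rightarrow> bool" where
  "unitary_group_of H U \<longleftrightarrow>
     (\<forall>t. linear_op (\<lambda>x. Some (U t x)) \<and> surj (U t) \<and>
          (\<forall>x y. cinner (U t x) (U t y) = cinner x y)) \<and>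
     U 0 = id \<and> (\<forall>s t. U (s + t) = U s \<circ> U t) \<and>
     (\<forall>x. continuous_on UNIV (\<lambda>t. U t x)) \<and>
     (\<forall>x. x \<in> dom H \<longleftrightarrow> (\<exists>v. ((\<lambda>t. U t x) has_vector_derivative v) (at 0))) \<and>
     (\<forall>x\<in>dom H. ((\<lambda>t. U t x) has_vector_derivative (\<i> *\<^sub>C app H x)) (at 0))"

end

(*
  Part (i).  Since H is self-adjoint and closed, B is a core as soon as (H + i) B is dense,
  i.e. as soon as no nonzero \<phi> is orthogonal to it.  For such a \<phi> and b in B, the function
  F t = <U t b, \<phi>> satisfies F' = F: under U-invariance directly, since
  <H U t b, \<phi>> = i <U t b, \<phi>>; for an analytic b, because all the functions
  <U t H^k b, \<phi>> have the same value at 0 and Taylor's theorem propagates the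
  exponential law along the real line.  A bounded multiple of exp t vanishes, so \<phi> is
  orthogonal to the dense set B.

  Part (ii).  On B, |X b|^2 = <b, H b> <= |(H + i) b|^2, so sequences of B converging in the
  graph norm of H are carried by X to convergent sequences.  As B is a core for H, every \<psi>
  in D(H) has v with (\<psi>, v) in the closed graph of X on B and (v, H \<psi>) in that of X.
  This gives H >= 0 and D(H) contained in D(closure X).  Hence H + 1 is onto, and writing
  H + 1 = (closure X - c)(closure X + c) for c = i, -i shows that X on B has dense
  shifted ranges, i.e. is essentially self-adjoint.  A self-adjoint operator has no proper
  hermitian extension, which identifies the closure of X on B with that of X, and the
  square of the latter with H.
*)
theory Submission
  imports Defs
begin

section \<open>Complex inner product spaces\<close>

lemma scaleC_zero_left [simp]: "0 *\<^sub>C (x::'a::chilbert) = 0"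
  using scaleR_scaleC[of 0 x] by simp

lemma scaleC_zero_right [simp]: "a *\<^sub>C (0::'a::chilbert) = 0"
  by (metis add_cancel_right_right scaleC_add_right)

lemma scaleC_minus_left: "(- a) *\<^sub>C (x::'a::chilbert) = - (a *\<^sub>C x)"
  by (metis add_eq_0_iff scaleC_add_left scaleC_zero_left add.right_inverse)

lemma scaleC_minus_right: "a *\<^sub>C (- x) = - (a *\<^sub>C (x::'a::chilbert))"
  by (metis add_eq_0_iff scaleC_add_right scaleC_zero_right)

lemma scaleC_diff_right: "a *\<^sub>C (x - y) = a *\<^sub>C x - a *\<^sub>C (y::'a::chilbert)"
  by (metis diff_conv_add_uminus scaleC_add_right scaleC_minus_right)

lemma cinner_add_right: "cinner x (y + z) = cinner x y + cinner x (z::'a::chilbert)"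
  by (metis complex_cnj_add cinner_add_left cinner_commute)

lemma cinner_scaleC_right: "cinner x (a *\<^sub>C y) = a * cinner x (y::'a::chilbert)"
  by (metis complex_cnj_cnj complex_cnj_mult cinner_commute cinner_scaleC_left)

lemma cinner_zero_left [simp]: "cinner 0 (y::'a::chilbert) = 0"
  using cinner_add_left[of 0 0 y] by simp

lemma cinner_zero_right [simp]: "cinner x (0::'a::chilbert) = 0"
  using cinner_add_right[of x 0 0] by simp

lemma cinner_minus_right: "cinner x (- y) = - cinner x (y::'a::chilbert)"
  by (metis add_eq_0_iff cinner_add_right cinner_zero_right)

lemma cinner_diff_right: "cinner x (y - z) = cinner x y - cinner x (z::'a::chilbert)"
  by (metis diff_conv_add_uminus cinner_add_right cinner_minus_right)

lemma cinner_scaleR_left: "cinner (r *\<^sub>R x) y = of_real r * cinner x (y::'a::chilbert)"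
  by (simp add: scaleR_scaleC cinner_scaleC_left)

lemma cinner_scaleR_right: "cinner x (r *\<^sub>R y) = of_real r * cinner x (y::'a::chilbert)"
  by (simp add: scaleR_scaleC cinner_scaleC_right)

lemma Re_cinner_commute: "Re (cinner y x) = Re (cinner x (y::'a::chilbert))"
  by (metis cinner_commute cnj.simps(1))

lemma Re_cinner_self: "Re (cinner x x) = (norm (x::'a::chilbert))\<^sup>2"
proof -
  have "0 \<le> Re (cinner x x)"
    using cinner_pos[of x] by (cases "x = 0") simp_all
  then show ?thesis by (simp add: norm_eq_sqrt_cinner)
qed

lemma cinner_self: "cinner x x = of_real ((norm (x::'a::chilbert))\<^sup>2)"
proof (rule complex_eqI)
  show "Im (cinner x x) = Im (of_real ((norm x)\<^sup>2))"
    using arg_cong[OF cinner_commute[of x x], of Im] by simp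
qed (simp add: Re_cinner_self)

lemma power2_norm_add:
  "(norm (x + y))\<^sup>2 = (norm x)\<^sup>2 + (norm y)\<^sup>2 + 2 * Re (cinner x (y::'a::chilbert))"
  unfolding Re_cinner_self[symmetric]
  by (simp add: cinner_add_left cinner_add_right Re_cinner_commute[of y x])

lemma power2_norm_diff:
  "(norm (x - y))\<^sup>2 = (norm x)\<^sup>2 + (norm y)\<^sup>2 - 2 * Re (cinner x (y::'a::chilbert))"
  using power2_norm_add[of x "- y"] by (simp add: cinner_minus_right)

lemma norm_scaleC: "norm (a *\<^sub>C x) = cmod a * norm (x::'a::chilbert)"
proof -
  have "(norm (a *\<^sub>C x))\<^sup>2 = Re (cinner (a *\<^sub>C x) (a *\<^sub>C x))"
    by (simp only: Re_cinner_self)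
  also have "\<dots> = (cmod a * norm x)\<^sup>2"
    by (simp add: cinner_scaleC_left cinner_scaleC_right cinner_self[of x] power_mult_distrib
        cmod_power2 power2_eq_square[of "Re a"] power2_eq_square[of "Im a"] algebra_simps)
  finally show ?thesis by (simp add: power2_eq_iff_nonneg)
qed

lemma Re_cinner_le: "Re (cinner x y) \<le> norm x * norm (y::'a::chilbert)"
proof (cases "norm x * norm y = 0")
  case False
  then have pos: "0 < norm x * norm y" by simp
  have "0 \<le> (norm (norm y *\<^sub>R x - norm x *\<^sub>R y))\<^sup>2" by simp
  also have "\<dots> = 2 * (norm x * norm y) * (norm x * norm y - Re (cinner x y))"
    unfolding power2_norm_diff
    by (simp add: cinner_scaleR_left cinner_scaleR_right power2_eq_square algebra_simps)
  finally show ?thesis using pos by (simp add: zero_le_mult_iff)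
qed auto

lemma cmod_cinner_le: "cmod (cinner x y) \<le> norm x * norm (y::'a::chilbert)"
proof (cases "cinner x y = 0")
  case False
  define a where "a = cnj (cinner x y) / cmod (cinner x y)"
  have "a * cinner x y = of_real (cmod (cinner x y))"
    using False by (simp add: a_def mult.commute[of "cnj _"] complex_norm_square[symmetric]
        power2_eq_square)
  then have "cmod (cinner x y) = Re (cinner x (a *\<^sub>C y))"
    by (simp add: cinner_scaleC_right)
  also have "\<dots> \<le> norm x * norm (a *\<^sub>C y)" by (rule Re_cinner_le)
  also have "norm (a *\<^sub>C y) = norm y"
    using False by (simp add: a_def norm_scaleC norm_divide)
  finally show ?thesis .
qed simp

lemma bounded_bilinear_cinner: "bounded_bilinear (cinner :: 'a::chilbert \<Rightarrow> 'a \<Rightarrow> complex)"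
proof
  show "\<exists>K. \<forall>a b::'a. cmod (cinner a b) \<le> norm a * norm b * K"
    using cmod_cinner_le by (intro exI[of _ 1] allI) simp
qed (simp_all add: cinner_add_left cinner_add_right cinner_scaleR_left cinner_scaleR_right
       scaleR_conv_of_real)

lemmas tendsto_cinner = bounded_bilinear.tendsto[OF bounded_bilinear_cinner]

lemma bounded_linear_scaleC: "bounded_linear (\<lambda>x::'a::chilbert. a *\<^sub>C x)"
proof
  show "\<exists>K. \<forall>x::'a. norm (a *\<^sub>C x) \<le> norm x * K"
    by (intro exI[of _ "cmod a"]) (simp add: norm_scaleC mult.commute)
qed (simp_all add: scaleC_add_right scaleR_scaleC scaleC_scaleC mult.commute)

lemmas tendsto_scaleC = bounded_linear.tendsto[OF bounded_linear_scaleC]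

section \<open>Subspaces and density\<close>

lemma csubspace_zero: "csubspace S \<Longrightarrow> 0 \<in> S"
  by (simp add: csubspace_def)

lemma csubspace_add: "csubspace S \<Longrightarrow> x \<in> S \<Longrightarrow> y \<in> S \<Longrightarrow> x + y \<in> S"
  by (simp add: csubspace_def)

lemma csubspace_scaleC: "csubspace S \<Longrightarrow> x \<in> S \<Longrightarrow> c *\<^sub>C x \<in> S"
  by (simp add: csubspace_def)

lemma csubspace_scaleR: "csubspace S \<Longrightarrow> x \<in> S \<Longrightarrow> r *\<^sub>R x \<in> S"
  by (simp add: csubspace_def scaleR_scaleC)

lemma csubspace_diff:
  assumes "csubspace S" "x \<in> S" "y \<in> S"
  shows "x - y \<in> S"
  using csubspace_add[OF assms(1,2) csubspace_scaleR[OF assms(1,3), of "-1"]] by simp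

lemma orthogonal_closure:
  fixes \<phi> :: "'a::chilbert"
  assumes "\<forall>m\<in>S. cinner m \<phi> = 0" and "x \<in> closure S"
  shows "cinner x \<phi> = 0"
proof -
  have "continuous_on UNIV (\<lambda>m. cinner m \<phi>)"
    by (rule linear_continuous_on[OF bounded_bilinear.bounded_linear_left[OF bounded_bilinear_cinner]])
  then have "closed {m. cinner m \<phi> = 0}"
    by (intro closed_Collect_eq continuous_on_const)
  then have "closure S \<subseteq> {m. cinner m \<phi> = 0}"
    using assms(1) by (intro closure_minimal) auto
  with assms(2) show ?thesis by blast
qed


lemma orthogonal_dense_eq_0:
  fixes \<phi> :: "'a::chilbert"
  assumes "dense_set S" and "\<forall>m\<in>S. cinner m \<phi> = 0"
  shows "\<phi> = 0"
  using orthogonal_closure[OF assms(2), of \<phi>] assms(1) cinner_self[of \<phi>]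
  by (simp add: dense_set_def)

lemma Re_cinner_eq_0_if_minimal:
  fixes w m :: "'a::chilbert"
  assumes minimal: "\<And>l::real. norm w \<le> norm (w - l *\<^sub>R m)"
  shows "Re (cinner w m) = 0"
proof (cases "m = 0")
  case False
  define r where "r = Re (cinner w m)"
  define l where "l = r / (norm m)\<^sup>2"
  have m: "0 < (norm m)\<^sup>2" using False by simp
  have "(norm w)\<^sup>2 \<le> (norm (w - l *\<^sub>R m))\<^sup>2"
    using minimal[of l] by (simp add: power_mono)
  also have "\<dots> = (norm w)\<^sup>2 - r\<^sup>2 / (norm m)\<^sup>2"
    unfolding power2_norm_diff using m
    by (simp add: cinner_scaleR_right r_def l_def field_simps power2_eq_square)
  finally have "r\<^sup>2 / (norm m)\<^sup>2 \<le> 0" by simp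
  with m show ?thesis by (simp add: r_def divide_le_0_iff)
qed simp

lemma Cauchy_minimizing_sequence:
  fixes S :: "'a::chilbert set"
  assumes S: "csubspace S" and s: "\<And>n. s n \<in> S"
    and d: "\<And>z. z \<in> S \<Longrightarrow> d \<le> norm (y - z)"
    and lim: "(\<lambda>n. norm (y - s n)) \<longlonglongrightarrow> d"
  shows "Cauchy s"
proof (rule metric_CauchyI)
  define \<delta> where "\<delta> n = (norm (y - s n))\<^sup>2 - d\<^sup>2" for n
  have "\<delta> \<longlonglongrightarrow> d\<^sup>2 - d\<^sup>2"
    unfolding \<delta>_def by (intro tendsto_intros lim)
  then have \<delta>: "\<delta> \<longlonglongrightarrow> 0" by simp
  have d0: "0 \<le> d"
    using LIMSEQ_le_const[OF lim] by simp
  have bound: "(dist (s m) (s n))\<^sup>2 \<le> 2 * \<delta> m + 2 * \<delta> n" for m n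
  proof -
    define u v where "u = y - s m" and "v = y - s n"
    have "u + v = 2 *\<^sub>R (y - (1/2) *\<^sub>R (s m + s n))"
      by (simp add: u_def v_def algebra_simps scaleR_2)
    moreover have "d \<le> norm (y - (1/2) *\<^sub>R (s m + s n))"
      by (intro d csubspace_scaleR[OF S] csubspace_add[OF S] s)
    ultimately have "2 * d \<le> norm (u + v)" by simp
    then have "4 * d\<^sup>2 \<le> (norm (u + v))\<^sup>2"
      using d0 power_mono[of "2 * d" "norm (u + v)" 2] by (simp add: power_mult_distrib)
    moreover have "(norm (u - v))\<^sup>2 + (norm (u + v))\<^sup>2 = 2 * (norm u)\<^sup>2 + 2 * (norm v)\<^sup>2"
      by (simp add: power2_norm_add power2_norm_diff)
    moreover have "(dist (s m) (s n))\<^sup>2 = (norm (u - v))\<^sup>2"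
      by (simp add: u_def v_def dist_norm norm_minus_commute)
    ultimately show ?thesis
      unfolding \<delta>_def u_def[symmetric] v_def[symmetric] by (smt (verit))
  qed
  fix e :: real
  assume "0 < e"
  then have "\<forall>\<^sub>F n in sequentially. \<delta> n < e\<^sup>2 / 4"
    using order_tendstoD(2)[OF \<delta>, of "e\<^sup>2 / 4"] by simp
  then obtain N where N: "\<And>n. N \<le> n \<Longrightarrow> \<delta> n < e\<^sup>2 / 4"
    by (auto simp: eventually_sequentially)
  have "dist (s m) (s n) < e" if "N \<le> m" "N \<le> n" for m n
  proof (rule power2_less_imp_less)
    show "(dist (s m) (s n))\<^sup>2 < e\<^sup>2"
      using bound[of m n] N[OF that(1)] N[OF that(2)] by linarith
  qed (use \<open>0 < e\<close> in simp)
  then show "\<exists>N. \<forall>m\<ge>N. \<forall>n\<ge>N. dist (s m) (s n) < e" by blast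
qed

lemma nearest_point_closure_csubspace:
  fixes S :: "'a::chilbert set"
  assumes S: "csubspace S"
  obtains p where "p \<in> closure S" and "\<And>z. z \<in> S \<Longrightarrow> norm (y - p) \<le> norm (y - p - z)"
proof -
  define d where "d = (INF z\<in>S. norm (y - z))"
  have bdd: "bdd_below ((\<lambda>z. norm (y - z)) ` S)"
    by (rule bdd_belowI2[of _ 0]) simp
  have d: "d \<le> norm (y - z)" if "z \<in> S" for z
    unfolding d_def using bdd that by (rule cINF_lower)
  have "d \<in> closure ((\<lambda>z. norm (y - z)) ` S)"
    unfolding d_def using csubspace_zero[OF S] bdd by (intro closure_contains_Inf) auto
  then obtain t where "\<And>n. t n \<in> (\<lambda>z. norm (y - z)) ` S" and t: "t \<longlonglongrightarrow> d"
    unfolding closure_sequential by blast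
  then have "\<forall>n. \<exists>z. z \<in> S \<and> t n = norm (y - z)" by blast
  then obtain s where s: "\<And>n. s n \<in> S" and ts: "\<And>n. t n = norm (y - s n)"
    using choice[of "\<lambda>n z. z \<in> S \<and> t n = norm (y - z)"] by blast
  have lim: "(\<lambda>n. norm (y - s n)) \<longlonglongrightarrow> d"
    using t by (simp add: ts[symmetric])
  obtain p where p: "s \<longlonglongrightarrow> p"
    using Cauchy_minimizing_sequence[OF S s d lim] Cauchy_convergent_iff convergent_def by blast
  have "(\<lambda>n. norm (y - s n)) \<longlonglongrightarrow> norm (y - p)" by (intro tendsto_intros p)
  with lim have dp: "norm (y - p) = d" using LIMSEQ_unique by blast
  show thesis
  proof
    show "p \<in> closure S"
      unfolding closure_sequential using s p by blast
  next
    fix z assume "z \<in> S"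
    have "(\<lambda>n. norm (y - (s n + z))) \<longlonglongrightarrow> norm (y - (p + z))" by (intro tendsto_intros p)
    moreover have "d \<le> norm (y - (s n + z))" for n
      by (intro d csubspace_add[OF S] s \<open>z \<in> S\<close>)
    ultimately have "d \<le> norm (y - (p + z))" by (intro LIMSEQ_le_const) auto
    then show "norm (y - p) \<le> norm (y - p - z)" by (simp add: dp algebra_simps)
  qed
qed

lemma dense_csubspace_if_orthogonal_trivial:
  fixes S :: "'a::chilbert set"
  assumes S: "csubspace S" and trivial: "\<And>\<phi>. \<forall>m\<in>S. cinner m \<phi> = 0 \<Longrightarrow> \<phi> = 0"
  shows "dense_set S"
proof -
  have "y \<in> closure S" for y
  proof -
    obtain p where p: "p \<in> closure S" "\<And>z. z \<in> S \<Longrightarrow> norm (y - p) \<le> norm (y - p - z)"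
      using nearest_point_closure_csubspace[OF S] by blast
    have Re0: "Re (cinner (y - p) m) = 0" if "m \<in> S" for m
      by (intro Re_cinner_eq_0_if_minimal p(2) csubspace_scaleR[OF S that])
    have "cinner m (y - p) = 0" if m: "m \<in> S" for m
    proof -
      have "Re (cinner (y - p) (\<i> *\<^sub>C m)) = 0" by (intro Re0 csubspace_scaleC[OF S m])
      then have "cinner (y - p) m = 0"
        using Re0[OF m] by (simp add: cinner_scaleC_right complex_eq_iff)
      then show ?thesis by (metis cinner_commute complex_cnj_zero)
    qed
    then have "y - p = 0" using trivial by blast
    with p(1) show ?thesis by simp
  qed
  then show ?thesis by (auto simp: dense_set_def)
qed

section \<open>Operators, graphs and closures\<close>

lemma Some_app: "x \<in> dom A \<Longrightarrow> A x = Some (app A x)"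
  by (auto simp: app_def)

lemma app_eqI: "A x = Some y \<Longrightarrow> app A x = y"
  by (simp add: app_def)

lemma map_le_app:
  assumes "A \<subseteq>\<^sub>m B" "x \<in> dom A"
  shows "x \<in> dom B" "app B x = app A x"
proof -
  have "B x = A x" using assms by (simp add: map_le_def)
  with assms(2) show "x \<in> dom B" "app B x = app A x" by (auto simp: app_def)
qed


lemma map_le_Some: "m \<subseteq>\<^sub>m m' \<Longrightarrow> m x = Some y \<Longrightarrow> m' x = Some y"
  by (metis domI map_le_def)


lemma restrict_map_le: "m |` B \<subseteq>\<^sub>m m"
  by (auto simp: map_le_def)


lemma linear_op_csubspace: "linear_op A \<Longrightarrow> csubspace (dom A)"
  by (simp add: linear_op_def)

lemma linear_op_add:
  "linear_op A \<Longrightarrow> x \<in> dom A \<Longrightarrow> y \<in> dom A \<Longrightarrow> app A (x + y) = app A x + app A y"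
  by (simp add: linear_op_def)

lemma linear_op_scaleC: "linear_op A \<Longrightarrow> x \<in> dom A \<Longrightarrow> app A (c *\<^sub>C x) = c *\<^sub>C app A x"
  by (simp add: linear_op_def)

lemma linear_op_diff:
  assumes "linear_op A" "x \<in> dom A" "y \<in> dom A"
  shows "app A (x - y) = app A x - app A y"
proof -
  have "x - y = x + (- 1) *\<^sub>C y" and "app A x - app A y = app A x + (- 1) *\<^sub>C app A y"
    by (simp_all add: scaleC_minus_left scaleC_one)
  then show ?thesis
    using assms by (simp only: linear_op_add linear_op_scaleC csubspace_scaleC linear_op_csubspace)
qed

lemma linear_op_zero:
  assumes "linear_op A"
  shows "app A 0 = 0"
  using linear_op_scaleC[OF assms csubspace_zero[OF linear_op_csubspace[OF assms]], of 0] by simp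

lemma linear_op_restrict:
  assumes lin: "linear_op A" and B: "csubspace B" "B \<subseteq> dom A"
  shows "linear_op (A |` B)"
proof -
  have dom: "dom (A |` B) = B" and app: "\<And>x. x \<in> B \<Longrightarrow> app (A |` B) x = app A x"
    and domA: "\<And>x. x \<in> B \<Longrightarrow> x \<in> dom A"
    using B(2) by (auto simp: app_def)
  have "app (A |` B) (x + y) = app (A |` B) x + app (A |` B) y" if "x \<in> B" "y \<in> B" for x y
    using that by (simp add: app csubspace_add[OF B(1)] linear_op_add[OF lin] domA)
  moreover have "app (A |` B) (c *\<^sub>C x) = c *\<^sub>C app (A |` B) x" if "x \<in> B" for c x
    using that by (simp add: app csubspace_scaleC[OF B(1)] linear_op_scaleC[OF lin] domA)
  ultimately show ?thesis
    unfolding linear_op_def dom using B(1) by blast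
qed

definition hermitian_op :: "'a::chilbert lop \<Rightarrow> bool" where
  "hermitian_op A \<longleftrightarrow> (\<forall>x\<in>dom A. \<forall>y\<in>dom A. cinner (app A x) y = cinner x (app A y))"

lemma hermitian_opD:
  "hermitian_op A \<Longrightarrow> x \<in> dom A \<Longrightarrow> y \<in> dom A \<Longrightarrow> cinner (app A x) y = cinner x (app A y)"
  by (simp add: hermitian_op_def)

lemma symmetric_op_iff: "symmetric_op A \<longleftrightarrow> linear_op A \<and> dense_set (dom A) \<and> hermitian_op A"
  by (auto simp: symmetric_op_def densely_defined_def hermitian_op_def)

lemma hermitian_op_restrict:
  assumes "hermitian_op A"
  shows "hermitian_op (A |` B)"
  unfolding hermitian_op_def
proof (intro ballI)
  fix x y assume "x \<in> dom (A |` B)" "y \<in> dom (A |` B)"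
  then have "x \<in> dom A" "y \<in> dom A" "app (A |` B) x = app A x" "app (A |` B) y = app A y"
    by (auto simp: app_def)
  with hermitian_opD[OF assms] show "cinner (app (A |` B) x) y = cinner x (app (A |` B) y)"
    by simp
qed

lemma hermitian_op_map_comp_self:
  assumes "hermitian_op T"
  shows "hermitian_op (T \<circ>\<^sub>m T)"
  unfolding hermitian_op_def
proof (intro ballI)
  have dom: "\<exists>u. T x = Some u \<and> u \<in> dom T" if "x \<in> dom (T \<circ>\<^sub>m T)" for x
    using that by (auto simp: map_comp_def split: option.splits)
  fix x y assume "x \<in> dom (T \<circ>\<^sub>m T)" "y \<in> dom (T \<circ>\<^sub>m T)"
  then obtain u v where x: "T x = Some u" "u \<in> dom T" and y: "T y = Some v" "v \<in> dom T"
    using dom by meson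
  have "cinner (app T u) y = cinner u v"
    using hermitian_opD[OF assms \<open>u \<in> dom T\<close>, of y] y by (auto simp: app_def)
  also have "\<dots> = cinner x (app T v)"
    using hermitian_opD[OF assms, of x v] x y by (auto simp: app_def)
  finally show "cinner (app (T \<circ>\<^sub>m T) x) y = cinner x (app (T \<circ>\<^sub>m T) y)"
    using x y by (simp add: app_def)
qed

lemma Im_cinner_hermitian:
  assumes "hermitian_op A" "x \<in> dom A"
  shows "Im (cinner x (app A x)) = 0"
  using arg_cong[OF cinner_commute[of x "app A x"], of Im] hermitian_opD[OF assms assms(2)]
  by simp

lemma graph_op_iff [simp]: "(x, y) \<in> graph_op A \<longleftrightarrow> A x = Some y"
  by (simp add: graph_op_def)

lemma closure_graph_op_iff:
  fixes A :: "'a::chilbert lop"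
  shows "(x, y) \<in> closure (graph_op A) \<longleftrightarrow>
    (\<exists>a. (\<forall>n. a n \<in> dom A) \<and> a \<longlonglongrightarrow> x \<and> (\<lambda>n. app A (a n)) \<longlonglongrightarrow> y)"
proof
  assume "(x, y) \<in> closure (graph_op A)"
  then obtain p where p: "\<And>n. p n \<in> graph_op A" "p \<longlonglongrightarrow> (x, y)"
    using closure_sequential[of "(x, y)"] by blast
  have "\<And>n. fst (p n) \<in> dom A \<and> app A (fst (p n)) = snd (p n)"
    using p(1) by (metis app_eqI domI graph_op_iff prod.collapse)
  moreover have "(\<lambda>n. fst (p n)) \<longlonglongrightarrow> x" "(\<lambda>n. snd (p n)) \<longlonglongrightarrow> y"
    using tendsto_fst[OF p(2)] tendsto_snd[OF p(2)] by simp_all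
  ultimately show "\<exists>a. (\<forall>n. a n \<in> dom A) \<and> a \<longlonglongrightarrow> x \<and> (\<lambda>n. app A (a n)) \<longlonglongrightarrow> y"
    by (intro exI[of _ "\<lambda>n. fst (p n)"]) simp
next
  assume "\<exists>a. (\<forall>n. a n \<in> dom A) \<and> a \<longlonglongrightarrow> x \<and> (\<lambda>n. app A (a n)) \<longlonglongrightarrow> y"
  then obtain a where a: "\<And>n. a n \<in> dom A" "a \<longlonglongrightarrow> x" "(\<lambda>n. app A (a n)) \<longlonglongrightarrow> y"
    by blast
  have "\<And>n. (a n, app A (a n)) \<in> graph_op A" using Some_app[OF a(1)] by simp
  moreover have "(\<lambda>n. (a n, app A (a n))) \<longlonglongrightarrow> (x, y)" using a by (intro tendsto_Pair)
  ultimately show "(x, y) \<in> closure (graph_op A)"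
    unfolding closure_sequential by (intro exI[of _ "\<lambda>n. (a n, app A (a n))"]) simp
qed

lemma closure_graph_op_mono:
  assumes "A \<subseteq>\<^sub>m A'"
  shows "closure (graph_op A) \<subseteq> closure (graph_op A')"
proof (rule closure_mono)
  show "graph_op A \<subseteq> graph_op A'"
    using assms by (auto simp: map_le_def graph_op_def) (metis domI)
qed

lemma closure_graph_op_functional:
  assumes lin: "linear_op A" and cl: "closable A"
    and "(x, y) \<in> closure (graph_op A)" "(x, y') \<in> closure (graph_op A)"
  shows "y = y'"
proof -
  obtain a where a: "\<And>n. a n \<in> dom A" "a \<longlonglongrightarrow> x" "(\<lambda>n. app A (a n)) \<longlonglongrightarrow> y"
    using assms(3) closure_graph_op_iff by blast
  obtain b where b: "\<And>n. b n \<in> dom A" "b \<longlonglongrightarrow> x" "(\<lambda>n. app A (b n)) \<longlonglongrightarrow> y'"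
    using assms(4) closure_graph_op_iff by blast
  have "\<forall>n. a n - b n \<in> dom A"
    using a(1) b(1) csubspace_diff[OF linear_op_csubspace[OF lin]] by blast
  moreover have "(\<lambda>n. a n - b n) \<longlonglongrightarrow> 0"
    using tendsto_diff[OF a(2) b(2)] by simp
  moreover have "(\<lambda>n. app A (a n - b n)) \<longlonglongrightarrow> y - y'"
    using tendsto_diff[OF a(3) b(3)] by (simp add: linear_op_diff[OF lin a(1) b(1)])
  ultimately have "(0, y - y') \<in> closure (graph_op A)"
    unfolding closure_graph_op_iff by (intro exI[of _ "\<lambda>n. a n - b n"]) simp
  with cl have "y - y' = 0" unfolding closable_def by blast
  then show ?thesis by simp
qed

lemma closure_op_eq_Some_iff:
  assumes "linear_op A" "closable A"
  shows "closure_op A x = Some y \<longleftrightarrow> (x, y) \<in> closure (graph_op A)"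
proof -
  have "(THE y. (x, y) \<in> closure (graph_op A)) = y'" if "(x, y') \<in> closure (graph_op A)" for y'
    by (rule the_equality[where P = "\<lambda>y. (x, y) \<in> closure (graph_op A)", OF that])
      (rule closure_graph_op_functional[OF assms _ that])
  then show ?thesis unfolding closure_op_def by auto
qed

lemma closure_op_eq_Some_iff_seq:
  assumes "linear_op A" "closable A"
  shows "closure_op A x = Some y \<longleftrightarrow>
    (\<exists>a. (\<forall>n. a n \<in> dom A) \<and> a \<longlonglongrightarrow> x \<and> (\<lambda>n. app A (a n)) \<longlonglongrightarrow> y)"
  using closure_op_eq_Some_iff[OF assms] closure_graph_op_iff by blast


lemma closure_op_eq_if_closure_graph_eq:
  assumes "closure (graph_op A) = graph_op H"
  shows "closure_op A = H"
  unfolding closure_op_def assms by (auto simp: fun_eq_iff)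

lemma closure_op_extends:
  assumes "linear_op A" "closable A"
  shows "A \<subseteq>\<^sub>m closure_op A"
  unfolding map_le_def
proof
  fix x assume x: "x \<in> dom A"
  then have "(x, app A x) \<in> closure (graph_op A)"
    using closure_subset[of "graph_op A"] Some_app[OF x] by auto
  then have "closure_op A x = Some (app A x)"
    using closure_op_eq_Some_iff[OF assms] by blast
  with Some_app[OF x] show "A x = closure_op A x" by simp
qed

lemma closure_op_mono:
  assumes "linear_op A" "closable A" "linear_op A'" "closable A'" "A \<subseteq>\<^sub>m A'"
  shows "closure_op A \<subseteq>\<^sub>m closure_op A'"
  unfolding map_le_def
proof
  fix x assume "x \<in> dom (closure_op A)"
  then obtain y where y: "closure_op A x = Some y" by blast
  then have "(x, y) \<in> closure (graph_op A')"
    using closure_op_eq_Some_iff[OF assms(1,2)] closure_graph_op_mono[OF assms(5)] by blast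
  then have "closure_op A' x = Some y"
    using closure_op_eq_Some_iff[OF assms(3,4)] by blast
  with y show "closure_op A x = closure_op A' x" by simp
qed

lemma closure_op_linear:
  assumes lin: "linear_op A" and cl: "closable A"
  shows "linear_op (closure_op A)"
proof -
  let ?C = "closure_op A"
  note seq = closure_op_eq_Some_iff_seq[OF lin cl]
  note S = linear_op_csubspace[OF lin]
  have add: "?C (x + y) = Some (app ?C x + app ?C y)" if x: "x \<in> dom ?C" and y: "y \<in> dom ?C"
    for x y
  proof -
    obtain a where a: "\<And>n. a n \<in> dom A" "a \<longlonglongrightarrow> x" "(\<lambda>n. app A (a n)) \<longlonglongrightarrow> app ?C x"
      using seq Some_app[OF x] by blast
    obtain b where b: "\<And>n. b n \<in> dom A" "b \<longlonglongrightarrow> y" "(\<lambda>n. app A (b n)) \<longlonglongrightarrow> app ?C y"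
      using seq Some_app[OF y] by blast
    have "(\<lambda>n. a n + b n) \<longlonglongrightarrow> x + y" by (intro tendsto_add a b)
    moreover have "(\<lambda>n. app A (a n + b n)) \<longlonglongrightarrow> app ?C x + app ?C y"
      using tendsto_add[OF a(3) b(3)] by (simp add: linear_op_add[OF lin a(1) b(1)])
    ultimately show ?thesis
      unfolding seq using a(1) b(1) csubspace_add[OF S] by (intro exI[of _ "\<lambda>n. a n + b n"]) simp
  qed
  have scale: "?C (c *\<^sub>C x) = Some (c *\<^sub>C app ?C x)" if x: "x \<in> dom ?C" for x c
  proof -
    obtain a where a: "\<And>n. a n \<in> dom A" "a \<longlonglongrightarrow> x" "(\<lambda>n. app A (a n)) \<longlonglongrightarrow> app ?C x"
      using seq Some_app[OF x] by blast
    have "(\<lambda>n. c *\<^sub>C a n) \<longlonglongrightarrow> c *\<^sub>C x" by (intro tendsto_scaleC a)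
    moreover have "(\<lambda>n. app A (c *\<^sub>C a n)) \<longlonglongrightarrow> c *\<^sub>C app ?C x"
      using tendsto_scaleC[OF a(3)] by (simp add: linear_op_scaleC[OF lin a(1)])
    ultimately show ?thesis
      unfolding seq using a(1) csubspace_scaleC[OF S] by (intro exI[of _ "\<lambda>n. c *\<^sub>C a n"]) simp
  qed
  have "0 \<in> dom ?C"
    using map_le_implies_dom_le[OF closure_op_extends[OF lin cl]] csubspace_zero[OF S] by blast
  with add scale show ?thesis
    unfolding linear_op_def csubspace_def by (simp add: domIff app_eqI)
qed

lemma closure_op_hermitian:
  assumes lin: "linear_op A" and cl: "closable A" and herm: "hermitian_op A"
  shows "hermitian_op (closure_op A)"
  unfolding hermitian_op_def
proof (intro ballI)
  let ?C = "closure_op A"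
  fix x y assume x: "x \<in> dom ?C" and y: "y \<in> dom ?C"
  obtain a where a: "\<And>n. a n \<in> dom A" "a \<longlonglongrightarrow> x" "(\<lambda>n. app A (a n)) \<longlonglongrightarrow> app ?C x"
    using closure_op_eq_Some_iff_seq[OF lin cl] Some_app[OF x] by blast
  obtain b where b: "\<And>n. b n \<in> dom A" "b \<longlonglongrightarrow> y" "(\<lambda>n. app A (b n)) \<longlonglongrightarrow> app ?C y"
    using closure_op_eq_Some_iff_seq[OF lin cl] Some_app[OF y] by blast
  have "(\<lambda>n. cinner (app A (a n)) (b n)) \<longlonglongrightarrow> cinner (app ?C x) y"
    by (intro tendsto_cinner a b)
  moreover have "(\<lambda>n. cinner (app A (a n)) (b n)) \<longlonglongrightarrow> cinner x (app ?C y)"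
    unfolding hermitian_opD[OF herm a(1) b(1)] by (intro tendsto_cinner a b)
  ultimately show "cinner (app ?C x) y = cinner x (app ?C y)"
    by (rule LIMSEQ_unique)
qed

lemma closable_if_hermitian:
  assumes dense: "dense_set (dom A)" and herm: "hermitian_op A"
  shows "closable A"
  unfolding closable_def
proof (intro allI impI)
  fix y assume "(0, y) \<in> closure (graph_op A)"
  then obtain a where a: "\<And>n. a n \<in> dom A" "a \<longlonglongrightarrow> 0" "(\<lambda>n. app A (a n)) \<longlonglongrightarrow> y"
    using closure_graph_op_iff by blast
  have "cinner z y = 0" if z: "z \<in> dom A" for z
  proof -
    have "(\<lambda>n. cinner z (app A (a n))) \<longlonglongrightarrow> cinner z y"
      by (intro tendsto_cinner a tendsto_const)
    moreover have "(\<lambda>n. cinner z (app A (a n))) \<longlonglongrightarrow> cinner (app A z) 0"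
      unfolding hermitian_opD[OF herm z a(1), symmetric] by (intro tendsto_cinner a tendsto_const)
    ultimately have "cinner z y = cinner (app A z) 0" by (rule LIMSEQ_unique)
    then show ?thesis by simp
  qed
  then show "y = 0" using orthogonal_dense_eq_0[OF dense] by blast
qed

lemma adjoint_op_eq_Some_iff:
  assumes dense: "dense_set (dom A)"
  shows "adjoint_op A y = Some z \<longleftrightarrow> (\<forall>x\<in>dom A. cinner (app A x) y = cinner x z)"
proof -
  let ?P = "\<lambda>z. \<forall>x\<in>dom A. cinner (app A x) y = cinner x z"
  have unique: "z1 = z2" if "?P z1" "?P z2" for z1 z2
    using orthogonal_dense_eq_0[OF dense, of "z1 - z2"] that by (simp add: cinner_diff_right)
  have the_eq: "(THE z. ?P z) = z'" if "?P z'" for z'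
    by (rule the_equality[where P = ?P, OF that]) (rule unique[OF _ that])
  have Some_the: "adjoint_op A y = Some (THE z. ?P z)" if "?P z'" for z'
    unfolding adjoint_op_def using that by (intro if_P) blast
  show ?thesis
  proof
    assume adj: "adjoint_op A y = Some z"
    then obtain z' where z': "?P z'" unfolding adjoint_op_def by (metis option.distinct(1))
    with adj Some_the[OF z'] the_eq[OF z'] show "?P z" by simp
  next
    assume z: "?P z"
    with Some_the[OF z] the_eq[OF z] show "adjoint_op A y = Some z" by simp
  qed
qed

lemma self_adjoint_linear: "self_adjoint H \<Longrightarrow> linear_op H"
  by (simp add: self_adjoint_def densely_defined_def)

lemma self_adjoint_dense: "self_adjoint H \<Longrightarrow> dense_set (dom H)"
  by (simp add: self_adjoint_def densely_defined_def)

lemma self_adjoint_eq_Some_iff: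
  assumes "self_adjoint H"
  shows "H y = Some z \<longleftrightarrow> (\<forall>x\<in>dom H. cinner (app H x) y = cinner x z)"
  using adjoint_op_eq_Some_iff[OF self_adjoint_dense[OF assms]] assms by (simp add: self_adjoint_def)

lemma self_adjoint_hermitian:
  assumes "self_adjoint H"
  shows "hermitian_op H"
  unfolding hermitian_op_def
proof (intro ballI)
  fix x y assume "x \<in> dom H" "y \<in> dom H"
  then show "cinner (app H x) y = cinner x (app H y)"
    using self_adjoint_eq_Some_iff[OF assms, of y "app H y"] Some_app[of y H] by blast
qed

lemma closure_graph_self_adjoint:
  assumes sa: "self_adjoint H"
  shows "closure (graph_op H) = graph_op H"
proof
  show "closure (graph_op H) \<subseteq> graph_op H"
  proof (clarify)
    fix x y assume "(x, y) \<in> closure (graph_op H)"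
    then obtain a where a: "\<And>n. a n \<in> dom H" "a \<longlonglongrightarrow> x" "(\<lambda>n. app H (a n)) \<longlonglongrightarrow> y"
      using closure_graph_op_iff by blast
    have "cinner (app H u) x = cinner u y" if u: "u \<in> dom H" for u
    proof -
      have "(\<lambda>n. cinner (app H u) (a n)) \<longlonglongrightarrow> cinner (app H u) x"
        by (intro tendsto_cinner a tendsto_const)
      moreover have "(\<lambda>n. cinner (app H u) (a n)) \<longlonglongrightarrow> cinner u y"
        unfolding hermitian_opD[OF self_adjoint_hermitian[OF sa] u a(1)]
        by (intro tendsto_cinner a tendsto_const)
      ultimately show ?thesis by (rule LIMSEQ_unique)
    qed
    then show "(x, y) \<in> graph_op H" using self_adjoint_eq_Some_iff[OF sa] by simp
  qed
qed (rule closure_subset)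

lemma self_adjoint_hermitian_extension_eq:
  assumes sa: "self_adjoint C" and herm: "hermitian_op S" and ext: "C \<subseteq>\<^sub>m S"
  shows "S = C"
proof (rule map_le_antisym[OF _ ext], unfold map_le_def, intro ballI)
  fix y assume y: "y \<in> dom S"
  have "cinner (app C x) y = cinner x (app S y)" if x: "x \<in> dom C" for x
    using hermitian_opD[OF herm map_le_app(1)[OF ext x] y] map_le_app(2)[OF ext x] by simp
  then have "C y = Some (app S y)" using self_adjoint_eq_Some_iff[OF sa] by blast
  with Some_app[OF y] show "S y = C y" by simp
qed

lemma adjoint_op_extends_hermitian:
  assumes "dense_set (dom A)" "hermitian_op A"
  shows "A \<subseteq>\<^sub>m adjoint_op A"
  unfolding map_le_def
proof
  fix y assume y: "y \<in> dom A"
  have "adjoint_op A y = Some (app A y)"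
    using adjoint_op_eq_Some_iff[OF assms(1)] hermitian_opD[OF assms(2) _ y] by blast
  with Some_app[OF y] show "A y = adjoint_op A y" by simp
qed

section \<open>Shifted ranges and self-adjointness\<close>

definition range_shift :: "'a::chilbert lop \<Rightarrow> complex \<Rightarrow> 'a set" where
  "range_shift A c = (\<lambda>x. app A x + c *\<^sub>C x) ` dom A"

lemma csubspace_range_shift:
  assumes lin: "linear_op A"
  shows "csubspace (range_shift A c)"
  unfolding csubspace_def range_shift_def
proof (intro conjI ballI allI)
  show "0 \<in> (\<lambda>x. app A x + c *\<^sub>C x) ` dom A"
    using linear_op_zero[OF lin] by (intro rev_image_eqI[OF csubspace_zero[OF linear_op_csubspace[OF lin]]]) simp
next
  fix u v assume "u \<in> (\<lambda>x. app A x + c *\<^sub>C x) ` dom A" "v \<in> (\<lambda>x. app A x + c *\<^sub>C x) ` dom A"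
  then obtain x y where "x \<in> dom A" "y \<in> dom A" "u = app A x + c *\<^sub>C x" "v = app A y + c *\<^sub>C y"
    by blast
  then show "u + v \<in> (\<lambda>x. app A x + c *\<^sub>C x) ` dom A"
    by (intro rev_image_eqI[of "x + y", OF csubspace_add[OF linear_op_csubspace[OF lin]]])
      (simp_all add: linear_op_add[OF lin] scaleC_add_right)
next
  fix k u assume "u \<in> (\<lambda>x. app A x + c *\<^sub>C x) ` dom A"
  then obtain x where "x \<in> dom A" "u = app A x + c *\<^sub>C x" by blast
  then show "k *\<^sub>C u \<in> (\<lambda>x. app A x + c *\<^sub>C x) ` dom A"
    by (intro rev_image_eqI[of "k *\<^sub>C x", OF csubspace_scaleC[OF linear_op_csubspace[OF lin]]])
      (simp_all add: linear_op_scaleC[OF lin] scaleC_add_right scaleC_scaleC mult.commute)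
qed

lemma closure_graph_in_closure_range_shift:
  fixes A :: "'a::chilbert lop"
  assumes "(x, y) \<in> closure (graph_op A)"
  shows "y + c *\<^sub>C x \<in> closure (range_shift A c)"
proof -
  obtain a where a: "\<And>n. a n \<in> dom A" "a \<longlonglongrightarrow> x" "(\<lambda>n. app A (a n)) \<longlonglongrightarrow> y"
    using assms closure_graph_op_iff by blast
  have "\<And>n. app A (a n) + c *\<^sub>C a n \<in> range_shift A c"
    using a(1) by (simp add: range_shift_def)
  moreover have "(\<lambda>n. app A (a n) + c *\<^sub>C a n) \<longlonglongrightarrow> y + c *\<^sub>C x"
    by (intro tendsto_add tendsto_scaleC a)
  ultimately show ?thesis
    unfolding closure_sequential by (intro exI[of _ "\<lambda>n. app A (a n) + c *\<^sub>C a n"]) simp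
qed

lemma norm_shift_hermitian:
  assumes herm: "hermitian_op A" and x: "x \<in> dom A" and c: "Re c = 0" "cmod c = 1"
  shows "(norm (app A x + c *\<^sub>C x))\<^sup>2 = (norm (app A x))\<^sup>2 + (norm x)\<^sup>2"
proof -
  have "Im (cinner (app A x) x) = 0"
    using Im_cinner_hermitian[OF herm x] hermitian_opD[OF herm x x] by simp
  then have "Re (cinner (app A x) (c *\<^sub>C x)) = 0"
    using c(1) by (simp add: cinner_scaleC_right)
  then show ?thesis using c(2) by (simp add: power2_norm_add norm_scaleC)
qed

lemma hermitian_shift_orthogonal_eq_0:
  assumes herm: "hermitian_op T" and x: "x \<in> dom T" and c: "Im c \<noteq> 0"
    and orth: "cinner x (app T x - c *\<^sub>C x) = 0"
  shows "x = 0"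
proof -
  have "Im (cinner x (app T x - c *\<^sub>C x)) = - Im c * (norm x)\<^sup>2"
    using Im_cinner_hermitian[OF herm x] by (simp add: cinner_diff_right cinner_scaleC_right cinner_self)
  with orth c show ?thesis by simp
qed

lemma Cauchy_if_dist_le:
  assumes "\<And>m n. dist (X m) (X n) \<le> dist (Y m) (Y n)" and "Cauchy Y"
  shows "Cauchy X"
  using assms unfolding Cauchy_def by (meson le_less_trans)

lemma coercive_shift_dist_le:
  assumes lin: "linear_op A"
    and coercive: "\<And>x. x \<in> dom A \<Longrightarrow> (norm (app A x))\<^sup>2 + (norm x)\<^sup>2 \<le> (norm (app A x + c *\<^sub>C x))\<^sup>2"
    and x: "x \<in> dom A" and y: "y \<in> dom A"
  shows "dist x y \<le> dist (app A x + c *\<^sub>C x) (app A y + c *\<^sub>C y)"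
    and "dist (app A x) (app A y) \<le> dist (app A x + c *\<^sub>C x) (app A y + c *\<^sub>C y)"
proof -
  have eq: "app A x + c *\<^sub>C x - (app A y + c *\<^sub>C y) = app A (x - y) + c *\<^sub>C (x - y)"
    by (simp add: linear_op_diff[OF lin x y] scaleC_diff_right)
  have sum: "(dist (app A x) (app A y))\<^sup>2 + (dist x y)\<^sup>2 \<le>
      (dist (app A x + c *\<^sub>C x) (app A y + c *\<^sub>C y))\<^sup>2"
    using coercive[OF csubspace_diff[OF linear_op_csubspace[OF lin] x y]]
    unfolding dist_norm eq linear_op_diff[OF lin x y, symmetric] .
  have "(dist x y)\<^sup>2 \<le> (dist (app A x + c *\<^sub>C x) (app A y + c *\<^sub>C y))\<^sup>2"
    using sum zero_le_power2[of "dist (app A x) (app A y)"] by linarith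
  then show "dist x y \<le> dist (app A x + c *\<^sub>C x) (app A y + c *\<^sub>C y)"
    by (rule power2_le_imp_le) simp
  have "(dist (app A x) (app A y))\<^sup>2 \<le> (dist (app A x + c *\<^sub>C x) (app A y + c *\<^sub>C y))\<^sup>2"
    using sum zero_le_power2[of "dist x y"] by linarith
  then show "dist (app A x) (app A y) \<le> dist (app A x + c *\<^sub>C x) (app A y + c *\<^sub>C y)"
    by (rule power2_le_imp_le) simp
qed

text \<open>A coercive shift with dense range is onto once the graph is closed: preimages of a
  convergent sequence in the range form a Cauchy sequence in the graph norm.\<close>
lemma closure_graph_shift_surj:
  fixes A :: "'a::chilbert lop"
  assumes lin: "linear_op A"
    and coercive: "\<And>x. x \<in> dom A \<Longrightarrow> (norm (app A x))\<^sup>2 + (norm x)\<^sup>2 \<le> (norm (app A x + c *\<^sub>C x))\<^sup>2"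
    and dense: "dense_set (range_shift A c)"
  obtains x y where "(x, y) \<in> closure (graph_op A)" and "y + c *\<^sub>C x = \<eta>"
proof -
  have "\<eta> \<in> closure (range_shift A c)" using dense by (simp add: dense_set_def)
  then obtain r where r: "\<And>n. r n \<in> range_shift A c" "r \<longlonglongrightarrow> \<eta>"
    unfolding closure_sequential by blast
  then have "\<forall>n. \<exists>x. x \<in> dom A \<and> r n = app A x + c *\<^sub>C x"
    unfolding range_shift_def image_iff by blast
  then obtain a where a: "\<And>n. a n \<in> dom A" and ra: "\<And>n. r n = app A (a n) + c *\<^sub>C a n"
    using choice[of "\<lambda>n x. x \<in> dom A \<and> r n = app A x + c *\<^sub>C x"] by blast
  have Cr: "Cauchy r" using r(2) by (rule LIMSEQ_imp_Cauchy)
  have "Cauchy a"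
    by (rule Cauchy_if_dist_le[OF _ Cr]) (simp add: ra coercive_shift_dist_le(1)[OF lin coercive a a])
  then obtain x where x: "a \<longlonglongrightarrow> x"
    using Cauchy_convergent_iff convergent_def by blast
  have "Cauchy (\<lambda>n. app A (a n))"
    by (rule Cauchy_if_dist_le[OF _ Cr]) (simp add: ra coercive_shift_dist_le(2)[OF lin coercive a a])
  then obtain y where y: "(\<lambda>n. app A (a n)) \<longlonglongrightarrow> y"
    using Cauchy_convergent_iff convergent_def by blast
  have "r \<longlonglongrightarrow> y + c *\<^sub>C x"
    unfolding ra by (intro tendsto_add tendsto_scaleC x y)
  then have "y + c *\<^sub>C x = \<eta>" using r(2) by (rule LIMSEQ_unique)
  moreover have "(x, y) \<in> closure (graph_op A)"
    unfolding closure_graph_op_iff using a x y by blast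
  ultimately show thesis by (rule that[rotated])
qed

lemma adjoint_closure_le_if_dense_ranges:
  fixes A :: "'a::chilbert lop"
  assumes lin: "linear_op A" and dense: "dense_set (dom A)" and herm: "hermitian_op A"
    and plus: "dense_set (range_shift A \<i>)" and minus: "dense_set (range_shift A (- \<i>))"
    and adj: "adjoint_op (closure_op A) y = Some z"
  shows "closure_op A y = Some z"
proof -
  let ?C = "closure_op A"
  have cl: "closable A" by (rule closable_if_hermitian[OF dense herm])
  note appC = map_le_app[OF closure_op_extends[OF lin cl]]
  have "dense_set (dom ?C)"
    using dense closure_mono[OF map_le_implies_dom_le[OF closure_op_extends[OF lin cl]]]
    by (auto simp: dense_set_def)
  then have adjC: "\<forall>x\<in>dom ?C. cinner (app ?C x) y = cinner x z"
    using adj adjoint_op_eq_Some_iff by blast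
  have adj': "cinner (app A u) y = cinner u z" if "u \<in> dom A" for u
    using bspec[OF adjC appC(1)[OF that]] appC(2)[OF that] by simp
  have "(norm (app A x))\<^sup>2 + (norm x)\<^sup>2 \<le> (norm (app A x + (- \<i>) *\<^sub>C x))\<^sup>2" if "x \<in> dom A" for x
    using norm_shift_hermitian[OF herm that] by simp
  then obtain x w where xw: "(x, w) \<in> closure (graph_op A)" "w + (- \<i>) *\<^sub>C x = z + (- \<i>) *\<^sub>C y"
    using closure_graph_shift_surj[OF lin _ minus] by metis
  have Cx: "?C x = Some w" using xw(1) closure_op_eq_Some_iff[OF lin cl] by blast
  have "cinner (app A u + \<i> *\<^sub>C u) (y - x) = 0" if u: "u \<in> dom A" for u
  proof -
    have "cinner (app A u) x = cinner u w"
      using hermitian_opD[OF closure_op_hermitian[OF lin cl herm] appC(1)[OF u], of x] appC[OF u] Cx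
      by (simp add: app_eqI domI)
    with adj'[OF u] have "cinner (app A u + \<i> *\<^sub>C u) (y - x) = cinner u ((z - \<i> *\<^sub>C y) - (w - \<i> *\<^sub>C x))"
      by (simp add: cinner_add_left cinner_add_right cinner_diff_right cinner_scaleC_left
          cinner_scaleC_right algebra_simps)
    also have "(z - \<i> *\<^sub>C y) - (w - \<i> *\<^sub>C x) = 0"
      using xw(2) by (simp add: scaleC_minus_left)
    finally show ?thesis by simp
  qed
  then have "y - x = 0"
    using orthogonal_dense_eq_0[OF plus] unfolding range_shift_def by blast
  then show ?thesis using Cx xw(2) by simp
qed

lemma ess_self_adjoint_if_dense_ranges:
  fixes A :: "'a::chilbert lop"
  assumes lin: "linear_op A" and dense: "dense_set (dom A)" and herm: "hermitian_op A"
    and plus: "dense_set (range_shift A \<i>)" and minus: "dense_set (range_shift A (- \<i>))"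
  shows "ess_self_adjoint A"
proof -
  have cl: "closable A" by (rule closable_if_hermitian[OF dense herm])
  let ?C = "closure_op A"
  have denseC: "dense_set (dom ?C)"
    using dense closure_mono[OF map_le_implies_dom_le[OF closure_op_extends[OF lin cl]]]
    by (auto simp: dense_set_def)
  have "adjoint_op ?C y = ?C y" for y
  proof (cases "adjoint_op ?C y")
    case None
    then show ?thesis
      using adjoint_op_extends_hermitian[OF denseC closure_op_hermitian[OF lin cl herm]]
      by (metis domIff map_le_def)
  qed (simp add: adjoint_closure_le_if_dense_ranges[OF assms])
  then show ?thesis
    using cl closure_op_linear[OF lin cl] denseC
    by (simp add: ess_self_adjoint_def self_adjoint_def densely_defined_def fun_eq_iff)
qed

lemma closure_graph_restrict_eq_if_dense_range:
  fixes H :: "'a::chilbert lop"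
  assumes sa: "self_adjoint H" and B: "csubspace B" "B \<subseteq> dom H"
    and dense: "dense_set (range_shift (H |` B) \<i>)"
  shows "closure (graph_op (H |` B)) = graph_op H"
proof
  note lin = self_adjoint_linear[OF sa] and herm = self_adjoint_hermitian[OF sa]
  show sub: "closure (graph_op (H |` B)) \<subseteq> graph_op H"
    using closure_graph_op_mono[OF restrict_map_le] closure_graph_self_adjoint[OF sa] by blast
  show "graph_op H \<subseteq> closure (graph_op (H |` B))"
  proof clarify
    fix \<psi> v assume "(\<psi>, v) \<in> graph_op H"
    then have Hpsi: "H \<psi> = Some v" and psi: "\<psi> \<in> dom H" by auto
    have "(norm (app (H |` B) x))\<^sup>2 + (norm x)\<^sup>2 \<le> (norm (app (H |` B) x + \<i> *\<^sub>C x))\<^sup>2"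
      if "x \<in> dom (H |` B)" for x
      using norm_shift_hermitian[OF hermitian_op_restrict[OF herm] that] by simp
    then obtain x y where xy: "(x, y) \<in> closure (graph_op (H |` B))" "y + \<i> *\<^sub>C x = v + \<i> *\<^sub>C \<psi>"
      using closure_graph_shift_surj[OF linear_op_restrict[OF lin B] _ dense] by metis
    have Hx: "H x = Some y" using sub xy(1) by auto
    then have x: "x \<in> dom H" by auto
    have "app H (x - \<psi>) + \<i> *\<^sub>C (x - \<psi>) = (y + \<i> *\<^sub>C x) - (v + \<i> *\<^sub>C \<psi>)"
      using Hx Hpsi by (simp add: linear_op_diff[OF lin x psi] app_eqI scaleC_diff_right)
    then have "app H (x - \<psi>) + \<i> *\<^sub>C (x - \<psi>) = 0" using xy(2) by simp
    then have "(norm (x - \<psi>))\<^sup>2 = 0"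
      using norm_shift_hermitian[OF herm csubspace_diff[OF linear_op_csubspace[OF lin] x psi], of \<i>]
      by simp
    then have "x = \<psi>" by simp
    with xy(1) Hx Hpsi show "(\<psi>, v) \<in> closure (graph_op (H |` B))" by simp
  qed
qed

lemma self_adjoint_nonneg_plus_id_surj:
  fixes H :: "'a::chilbert lop"
  assumes sa: "self_adjoint H" and H_nonneg: "nonneg_op H"
  obtains \<psi> where "\<psi> \<in> dom H" and "app H \<psi> + \<psi> = \<eta>"
proof -
  note lin = self_adjoint_linear[OF sa]
  have Re_nonneg: "0 \<le> Re (cinner x (app H x))" if "x \<in> dom H" for x
    using H_nonneg that by (simp add: nonneg_op_def)
  have "dense_set (range_shift H 1)"
  proof (rule dense_csubspace_if_orthogonal_trivial[OF csubspace_range_shift[OF lin]])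
    fix \<phi> assume "\<forall>m\<in>range_shift H 1. cinner m \<phi> = 0"
    then have "cinner (app H x) \<phi> = cinner x (- \<phi>)" if "x \<in> dom H" for x
      using that by (simp add: range_shift_def scaleC_one cinner_add_left cinner_minus_right
          eq_neg_iff_add_eq_0)
    then have "H \<phi> = Some (- \<phi>)" using self_adjoint_eq_Some_iff[OF sa] by blast
    then have "0 \<le> - (norm \<phi>)\<^sup>2"
      using Re_nonneg[of \<phi>] by (simp add: app_eqI domI cinner_minus_right Re_cinner_self)
    then show "\<phi> = 0" by simp
  qed
  moreover have "(norm (app H x))\<^sup>2 + (norm x)\<^sup>2 \<le> (norm (app H x + 1 *\<^sub>C x))\<^sup>2" if "x \<in> dom H" for x
    using Re_nonneg[OF that] by (simp add: scaleC_one power2_norm_add Re_cinner_commute)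
  ultimately obtain x y where xy: "(x, y) \<in> closure (graph_op H)" "y + 1 *\<^sub>C x = \<eta>"
    using closure_graph_shift_surj[OF lin] by metis
  then have "H x = Some y" using closure_graph_self_adjoint[OF sa] by auto
  with xy(2) show thesis by (intro that[of x]) (auto simp: app_eqI scaleC_one)
qed

lemma dense_range_shift_restrict:
  fixes H :: "'a::chilbert lop"
  assumes lin: "linear_op H" and B: "csubspace B" "B \<subseteq> dom H"
    and orth: "\<And>\<phi>. \<forall>b\<in>B. cinner (app H b + c *\<^sub>C b) \<phi> = 0 \<Longrightarrow> \<phi> = 0"
  shows "dense_set (range_shift (H |` B) c)"
proof (rule dense_csubspace_if_orthogonal_trivial[OF csubspace_range_shift[OF linear_op_restrict[OF lin B]]])
  fix \<phi> assume "\<forall>m\<in>range_shift (H |` B) c. cinner m \<phi> = 0"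
  moreover have "app (H |` B) b = app H b" if "b \<in> B" for b
    using that by (simp add: app_def)
  ultimately have "\<forall>b\<in>B. cinner (app H b + c *\<^sub>C b) \<phi> = 0"
    using B(2) by (auto simp: range_shift_def)
  then show "\<phi> = 0" by (rule orth)
qed

lemma cinner_app_eq_if_orthogonal:
  assumes "\<forall>b\<in>B. cinner (app H b + \<i> *\<^sub>C b) \<phi> = 0" and "y \<in> B"
  shows "cinner (app H y) \<phi> = \<i> * cinner y \<phi>"
  using assms by (simp add: cinner_add_left cinner_scaleC_left add_eq_0_iff2)

section \<open>Unitary groups\<close>

lemma has_vector_derivative_self_eq_exp:
  fixes F :: "real \<Rightarrow> 'b::real_normed_vector"
  assumes deriv: "\<And>t. (F has_vector_derivative F t) (at t)"
  shows "F t = exp t *\<^sub>R F 0"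
proof -
  define G where "G t = exp (- t) *\<^sub>R F t" for t
  have "(G has_vector_derivative 0) (at t within UNIV)" for t
  proof -
    have "((\<lambda>t. exp (- t)) has_real_derivative exp (- t) * (- 1)) (at t)"
      by (intro derivative_eq_intros) auto
    from has_vector_derivative_scaleR[OF this deriv]
    show ?thesis unfolding G_def by simp
  qed
  then obtain k where "\<And>t. G t = k"
    using has_vector_derivative_zero_constant[of UNIV G] by auto
  then have "exp (- t) *\<^sub>R F t = F 0" by (metis G_def exp_zero minus_zero scaleR_one)
  then have "exp t *\<^sub>R exp (- t) *\<^sub>R F t = exp t *\<^sub>R F 0" by simp
  then show ?thesis by (simp add: exp_minus)
qed

lemma bounded_times_exp_eq_0:
  fixes a :: "'b::real_normed_vector"
  assumes "\<And>t::real. norm a * exp t \<le> M"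
  shows "a = 0"
proof (rule ccontr)
  assume "a \<noteq> 0"
  then have pos: "0 < norm a" by simp
  define t where "t = ln ((\<bar>M\<bar> + 1) / norm a)"
  have "norm a * exp t = \<bar>M\<bar> + 1" using pos by (simp add: t_def add_pos_nonneg)
  with assms[of t] show False by linarith
qed

locale unitary_group =
  fixes H :: "'a::chilbert lop" and U :: "real \<Rightarrow> 'a \<Rightarrow> 'a"
  assumes unitary_group_of: "unitary_group_of H U"
begin

lemma U_linear_op: "linear_op (\<lambda>x. Some (U t x))"
  using unitary_group_of by (simp add: unitary_group_of_def)

lemma U_add: "U t (x + y) = U t x + U t y"
  using linear_op_add[OF U_linear_op[of t], of x y] by (simp add: app_def)

lemma U_scaleC: "U t (c *\<^sub>C x) = c *\<^sub>C U t x"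
  using linear_op_scaleC[OF U_linear_op[of t], of x c] by (simp add: app_def)

lemma norm_U: "norm (U t x) = norm x"
  using unitary_group_of by (simp add: unitary_group_of_def norm_eq_sqrt_cinner)

lemma bounded_linear_U: "bounded_linear (U t)"
proof
  show "\<exists>K. \<forall>x. norm (U t x) \<le> norm x * K"
    by (intro exI[of _ 1]) (simp add: norm_U)
qed (simp_all add: U_add U_scaleC scaleR_scaleC)

lemma U_plus: "U (s + t) x = U s (U t x)"
  using unitary_group_of by (simp add: unitary_group_of_def)

lemma U_0: "U 0 x = x"
  using unitary_group_of by (simp add: unitary_group_of_def)

lemma dom_H_iff: "x \<in> dom H \<longleftrightarrow> (\<exists>v. ((\<lambda>t. U t x) has_vector_derivative v) (at 0))"
  using unitary_group_of by (simp add: unitary_group_of_def)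

lemma has_vector_derivative_U_0:
  "x \<in> dom H \<Longrightarrow> ((\<lambda>t. U t x) has_vector_derivative \<i> *\<^sub>C app H x) (at 0)"
  using unitary_group_of by (simp add: unitary_group_of_def)

lemma has_vector_derivative_U_shifted:
  assumes "x \<in> dom H"
  shows "((\<lambda>h. U h (U s x)) has_vector_derivative U s (\<i> *\<^sub>C app H x)) (at 0)"
proof -
  have "((\<lambda>h. U s (U h x)) has_vector_derivative U s (\<i> *\<^sub>C app H x)) (at 0)"
    by (rule bounded_linear.has_vector_derivative[OF bounded_linear_U has_vector_derivative_U_0[OF assms]])
  moreover have "(\<lambda>h. U s (U h x)) = (\<lambda>h. U h (U s x))"
    by (metis U_plus add.commute)
  ultimately show ?thesis by simp
qed

lemma U_dom_H: "x \<in> dom H \<Longrightarrow> U s x \<in> dom H"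
  using dom_H_iff has_vector_derivative_U_shifted by blast

lemma H_U_commute:
  assumes x: "x \<in> dom H"
  shows "app H (U s x) = U s (app H x)"
proof -
  have "\<i> *\<^sub>C app H (U s x) = \<i> *\<^sub>C U s (app H x)"
    using vector_derivative_unique_at[OF has_vector_derivative_U_0[OF U_dom_H[OF x]]
        has_vector_derivative_U_shifted[OF x]] by (simp add: U_scaleC)
  then have "(- \<i>) *\<^sub>C \<i> *\<^sub>C app H (U s x) = (- \<i>) *\<^sub>C \<i> *\<^sub>C U s (app H x)" by simp
  then show ?thesis by (simp add: scaleC_scaleC scaleC_one)
qed

lemma has_vector_derivative_U:
  assumes "x \<in> dom H"
  shows "((\<lambda>t. U t x) has_vector_derivative U s (\<i> *\<^sub>C app H x)) (at s)"
proof -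
  have "((\<lambda>t. t - s) has_vector_derivative 1) (at s)"
    using has_real_derivative_iff_has_vector_derivative by (auto intro!: derivative_eq_intros)
  then have
    "(((\<lambda>h. U h (U s x)) \<circ> (\<lambda>t. t - s)) has_vector_derivative 1 *\<^sub>R U s (\<i> *\<^sub>C app H x)) (at s)"
    by (rule vector_diff_chain_at) (simp add: has_vector_derivative_U_shifted[OF assms])
  moreover have "(\<lambda>h. U h (U s x)) \<circ> (\<lambda>t. t - s) = (\<lambda>t. U t x)"
    by (simp add: o_def U_plus[symmetric])
  ultimately show ?thesis by simp
qed

lemma has_vector_derivative_cinner_U:
  assumes "x \<in> dom H"
  shows "((\<lambda>t. cinner (U t x) \<phi>) has_vector_derivative - \<i> * cinner (U t (app H x)) \<phi>) (at t)"
  using bounded_linear.has_vector_derivative[OF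
      bounded_bilinear.bounded_linear_left[OF bounded_bilinear_cinner] has_vector_derivative_U[OF assms]]
  by (simp add: U_scaleC cinner_scaleC_left)

lemma orthogonal_shift_eq_0_if_invariant:
  assumes B: "B \<subseteq> dom H" "dense_set B" and inv: "\<And>t. U t ` B \<subseteq> B"
    and orth: "\<forall>b\<in>B. cinner (app H b + \<i> *\<^sub>C b) \<phi> = 0"
  shows "\<phi> = 0"
proof (rule orthogonal_dense_eq_0[OF B(2)], intro ballI)
  fix b assume b: "b \<in> B"
  then have Hb: "b \<in> dom H" using B(1) by blast
  have UB: "U t b \<in> B" for t using inv b by blast
  define F where "F t = cinner (U t b) \<phi>" for t
  have "(F has_vector_derivative F t) (at t)" for t
  proof -
    have "- \<i> * cinner (U t (app H b)) \<phi> = F t"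
      using cinner_app_eq_if_orthogonal[OF orth UB] by (simp add: F_def H_U_commute[OF Hb, symmetric])
    then show ?thesis
      using has_vector_derivative_cinner_U[OF Hb, of \<phi> t] unfolding F_def by argo
  qed
  then have F_exp: "F t = exp t *\<^sub>R F 0" for t by (rule has_vector_derivative_self_eq_exp)
  have "norm (F 0) * exp t \<le> norm b * norm \<phi>" for t
  proof -
    have "norm (F 0) * exp t = norm (F t)" by (simp add: F_exp[of t] mult.commute)
    also have "\<dots> \<le> norm b * norm \<phi>"
      unfolding F_def using cmod_cinner_le[of "U t b" \<phi>] by (simp add: norm_U)
    finally show ?thesis .
  qed
  then have "F 0 = 0" by (rule bounded_times_exp_eq_0)
  then show "cinner b \<phi> = 0" by (simp add: F_def U_0)
qed

end

section \<open>Analytic vectors\<close>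

lemma Taylor_family_eq_exp:
  fixes g :: "nat \<Rightarrow> real \<Rightarrow> real"
  assumes deriv: "\<And>k \<tau>. DERIV (g k) \<tau> :> g (Suc k) \<tau>"
    and bound: "\<And>k \<tau>. \<bar>g k \<tau>\<bar> \<le> M k"
    and remainder: "(\<lambda>n. M n * d ^ n / fact n) \<longlonglongrightarrow> 0"
    and t: "\<bar>t - s\<bar> \<le> d" and start: "\<And>k. g k s = c"
  shows "g 0 t = c * exp (t - s)"
proof (cases "t = s")
  case False
  define P where "P n = (\<Sum>m<n. c / fact m * (t - s) ^ m)" for n
  have err: "\<bar>g 0 t - P n\<bar> \<le> M n * d ^ n / fact n" for n
  proof (cases "n = 0")
    case True
    then show ?thesis using bound[of 0 t] by (simp add: P_def)
  next
    case False
    obtain \<tau> where "g 0 t = (\<Sum>m<n. g m s / fact m * (t - s) ^ m) + g n \<tau> / fact n * (t - s) ^ n"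
      using Taylor[where diff = g and f = "g 0" and a = "min s t" and b = "max s t" and c = s
          and x = t and n = n] False deriv \<open>t \<noteq> s\<close> by fastforce
    then have "\<bar>g 0 t - P n\<bar> = \<bar>g n \<tau>\<bar> * \<bar>t - s\<bar> ^ n / fact n"
      by (simp add: P_def start abs_mult power_abs)
    also have "\<dots> \<le> M n * d ^ n / fact n"
      using bound[of n \<tau>] t abs_ge_zero[of "g n \<tau>"]
      by (intro divide_right_mono mult_mono power_mono) auto
    finally show ?thesis .
  qed
  have "(\<lambda>n. g 0 t - P n) \<longlonglongrightarrow> 0"
    by (rule Lim_null_comparison[OF _ remainder]) (use err in auto)
  then have "P \<longlonglongrightarrow> g 0 t"
    using tendsto_diff[OF tendsto_const[of "g 0 t"]] by fastforce
  moreover have "(\<lambda>m. c * ((t - s) ^ m /\<^sub>R fact m)) sums (c * exp (t - s))"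
    by (rule sums_mult[OF exp_converges])
  then have "P \<longlonglongrightarrow> c * exp (t - s)"
    unfolding sums_def P_def by (simp add: divide_inverse mult_ac)
  ultimately show ?thesis by (rule LIMSEQ_unique)
qed (simp add: start)

lemma Taylor_family_eq_exp_complex:
  fixes f :: "nat \<Rightarrow> real \<Rightarrow> complex"
  assumes deriv: "\<And>k \<tau>. (f k has_vector_derivative f (Suc k) \<tau>) (at \<tau>)"
    and bound: "\<And>k \<tau>. cmod (f k \<tau>) \<le> M k"
    and remainder: "(\<lambda>n. M (j + n) * d ^ n / fact n) \<longlonglongrightarrow> 0"
    and t: "\<bar>t - s\<bar> \<le> d" and start: "\<And>k. f k s = c"
  shows "f j t = exp (t - s) *\<^sub>R c"
proof -
  have "Re (f (j + 0) t) = Re c * exp (t - s)"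
  proof (rule Taylor_family_eq_exp[where g = "\<lambda>k \<tau>. Re (f (j + k) \<tau>)", OF _ _ remainder t])
    show "DERIV (\<lambda>\<tau>. Re (f (j + k) \<tau>)) \<tau> :> Re (f (j + Suc k) \<tau>)" for k \<tau>
      using has_field_derivative_Re[OF deriv[of "j + k" \<tau>]] by simp
    show "\<bar>Re (f (j + k) \<tau>)\<bar> \<le> M (j + k)" for k \<tau>
      using abs_Re_le_cmod bound order_trans by blast
  qed (simp add: start)
  moreover have "Im (f (j + 0) t) = Im c * exp (t - s)"
  proof (rule Taylor_family_eq_exp[where g = "\<lambda>k \<tau>. Im (f (j + k) \<tau>)", OF _ _ remainder t])
    show "DERIV (\<lambda>\<tau>. Im (f (j + k) \<tau>)) \<tau> :> Im (f (j + Suc k) \<tau>)" for k \<tau>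
      using has_field_derivative_Im[OF deriv[of "j + k" \<tau>]] by simp
    show "\<bar>Im (f (j + k) \<tau>)\<bar> \<le> M (j + k)" for k \<tau>
      using abs_Im_le_cmod bound order_trans by blast
  qed (simp add: start)
  ultimately show ?thesis by (simp add: complex_eq_iff mult.commute)
qed

lemma fact_add_le: "fact (m + n) \<le> (2::real) ^ (m + n) * fact m * fact n"
proof -
  have "fact (m + n) = ((m + n) choose m) * fact m * (fact n :: nat)"
    using binomial_fact_lemma[of m "m + n"] by (simp add: mult_ac)
  also have "\<dots> \<le> 2 ^ (m + n) * fact m * fact n"
    by (intro mult_right_mono binomial_le_pow2) auto
  finally have "fact (m + n) \<le> (2 ^ (m + n) * fact m * fact n :: nat)" .
  then have "real (fact (m + n)) \<le> real (2 ^ (m + n) * fact m * fact n)"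
    by (simp only: of_nat_le_iff)
  then show ?thesis by (simp add: of_nat_fact)
qed

text \<open>Halving the radius absorbs the quotient (n + j)! / n!, which is at most 2^(n + j) j!.\<close>
lemma tendsto_shifted_remainder:
  fixes M :: "nat \<Rightarrow> real"
  assumes M: "\<And>k. 0 \<le> M k" and r: "0 < r" and remainder: "(\<lambda>n. M n * r ^ n / fact n) \<longlonglongrightarrow> 0"
  shows "(\<lambda>n. M (j + n) * (r / 2) ^ n / fact n) \<longlonglongrightarrow> 0"
proof -
  define C where "C = 2 ^ j * fact j / r ^ j"
  have lim: "(\<lambda>n. M (n + j) * r ^ (n + j) / fact (n + j) * C) \<longlonglongrightarrow> 0"
    using tendsto_mult_left_zero[OF LIMSEQ_ignore_initial_segment[OF remainder, of j]] by simp
  have le: "M (j + n) * (r / 2) ^ n / fact n \<le> M (n + j) * r ^ (n + j) / fact (n + j) * C" for n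
  proof -
    have "(r / 2) ^ n / fact n = r ^ n / (2 ^ n * fact n)" by (simp add: power_divide)
    also have "\<dots> \<le> r ^ n * (2 ^ j * fact j) / fact (n + j)"
      using fact_add_le[of n j] r by (simp add: field_simps power_add)
    also have "\<dots> = r ^ (n + j) / fact (n + j) * C"
      using r by (simp add: C_def power_add field_simps)
    finally have "M (j + n) * ((r / 2) ^ n / fact n) \<le> M (j + n) * (r ^ (n + j) / fact (n + j) * C)"
      by (rule mult_left_mono[OF _ M])
    then show ?thesis by (simp add: add.commute)
  qed
  show ?thesis
  proof (rule Lim_null_comparison[OF _ lim])
    show "\<forall>\<^sub>F n in sequentially. norm (M (j + n) * (r / 2) ^ n / fact n)
        \<le> M (n + j) * r ^ (n + j) / fact (n + j) * C"
      using le M r by (intro always_eventually allI) simp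
  qed
qed

lemma derivative_chain_eq_0:
  fixes f :: "nat \<Rightarrow> real \<Rightarrow> complex"
  assumes deriv: "\<And>k \<tau>. (f k has_vector_derivative f (Suc k) \<tau>) (at \<tau>)"
    and bound: "\<And>k \<tau>. cmod (f k \<tau>) \<le> M k"
    and r: "0 < r" and remainder: "(\<lambda>n. M n * r ^ n / fact n) \<longlonglongrightarrow> 0"
    and start: "\<And>k. f k 0 = f 0 0"
  shows "f 0 0 = 0"
proof -
  define d where "d = r / 2"
  have d: "0 < d" using r by (simp add: d_def)
  have M: "0 \<le> M k" for k using bound[of k 0] norm_ge_zero[of "f k 0"] by linarith
  have growth: "f k (real N * d) = exp (real N * d) *\<^sub>R f 0 0" for N k
  proof (induction N arbitrary: k)
    case 0
    show ?case using start[of k] by simp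
  next
    case (Suc N)
    have step: "\<bar>real (Suc N) * d - real N * d\<bar> \<le> d"
      using d by (simp add: algebra_simps)
    have "f k (real (Suc N) * d) = exp (real (Suc N) * d - real N * d) *\<^sub>R (exp (real N * d) *\<^sub>R f 0 0)"
      by (rule Taylor_family_eq_exp_complex[where f = f and M = M, OF deriv bound
            tendsto_shifted_remainder[OF M r remainder, of k, folded d_def] step Suc.IH])
    then show ?case by (simp add: exp_add[symmetric])
  qed
  have "norm (f 0 0) * exp t \<le> M 0" for t
  proof -
    obtain N :: nat where "t / d \<le> real N" using real_arch_simple by blast
    then have "exp t \<le> exp (real N * d)" using d by (simp add: field_simps)
    then have "norm (f 0 0) * exp t \<le> norm (f 0 0) * exp (real N * d)"
      by (rule mult_left_mono) simp
    also have "\<dots> = norm (f 0 (real N * d))" using growth[of 0 N] by (simp add: mult.commute)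
    also have "\<dots> \<le> M 0" by (rule bound)
    finally show ?thesis .
  qed
  then show ?thesis by (rule bounded_times_exp_eq_0)
qed

lemma op_pow_invariant:
  assumes B: "B \<subseteq> dom H" "\<forall>y\<in>B. app H y \<in> B" and x: "x \<in> B"
  shows "op_pow H n x = Some ((app H ^^ n) x) \<and> (app H ^^ n) x \<in> B"
proof (induction n)
  case (Suc n)
  then have "(app H ^^ n) x \<in> dom H" using B(1) by blast
  with Suc show ?case using B(2) by (simp add: Some_app[of "(app H ^^ n) x" H])
qed (simp add: x)

context unitary_group
begin

lemma orthogonal_shift_eq_0_if_analytic:
  assumes B: "B \<subseteq> dom H" "\<forall>y\<in>B. app H y \<in> B"
    and S: "S \<subseteq> B" "dense_set S" "\<forall>x\<in>S. analytic_vector H x"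
    and orth: "\<forall>b\<in>B. cinner (app H b + \<i> *\<^sub>C b) \<phi> = 0"
  shows "\<phi> = 0"
proof (rule orthogonal_dense_eq_0[OF S(2)], intro ballI)
  fix x assume "x \<in> S"
  then have x: "x \<in> B" "analytic_vector H x" using S by auto
  define v where "v n = (app H ^^ n) x" for n
  have v: "op_pow H n x = Some (v n)" "v n \<in> B" for n
    using op_pow_invariant[OF B x(1)] by (simp_all add: v_def)
  have vH: "v n \<in> dom H" for n using v(2) B(1) by blast
  have v_Suc: "app H (v n) = v (Suc n)" for n by (simp add: v_def)
  define f where "f k t = (- \<i>) ^ k * cinner (U t (v k)) \<phi>" for k t
  have "(f k has_vector_derivative f (Suc k) t) (at t)" for k t
  proof -
    have "((\<lambda>t. (- \<i>) ^ k * cinner (U t (v k)) \<phi>) has_vector_derivative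
        (- \<i>) ^ k * (- \<i> * cinner (U t (app H (v k))) \<phi>)) (at t)"
      by (rule has_vector_derivative_mult_right[OF has_vector_derivative_cinner_U[OF vH]])
    then show ?thesis unfolding f_def by (simp add: v_Suc mult_ac)
  qed
  moreover have "cmod (f k t) \<le> norm (v k) * norm \<phi>" for k t
    using cmod_cinner_le[of "U t (v k)" \<phi>] by (simp add: f_def norm_mult norm_power norm_U)
  moreover obtain r where r: "0 < r" "summable (\<lambda>n. r ^ n * norm (app (op_pow H n) x) / fact n)"
    using x(2) by (auto simp: analytic_vector_def)
  moreover have "(\<lambda>n. norm (v n) * norm \<phi> * r ^ n / fact n) \<longlonglongrightarrow> 0"
    using tendsto_mult_right_zero[OF summable_LIMSEQ_zero[OF r(2)], of "norm \<phi>"]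
    by (simp add: v app_eqI mult_ac)
  moreover have "f k 0 = f 0 0" for k
  proof -
    have "cinner (v k) \<phi> = \<i> ^ k * cinner x \<phi>"
    proof (induction k)
      case (Suc k)
      have "cinner (v (Suc k)) \<phi> = \<i> * cinner (v k) \<phi>"
        using cinner_app_eq_if_orthogonal[OF orth v(2)] by (simp add: v_Suc)
      with Suc show ?case by simp
    qed (simp add: v_def)
    then have "f k 0 = (- \<i>) ^ k * \<i> ^ k * cinner x \<phi>"
      by (simp add: f_def U_0 mult.assoc)
    also have "(- \<i>) ^ k * \<i> ^ k = (1::complex)"
      by (simp add: power_mult_distrib[symmetric])
    finally show ?thesis by (simp add: f_def U_0 v_def)
  qed
  ultimately have "f 0 0 = 0" by (intro derivative_chain_eq_0) auto
  then show "cinner x \<phi> = 0" by (simp add: f_def U_0 v_def)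
qed

end

section \<open>Square roots on a core\<close>

locale square_root_on_core =
  fixes H X :: "'a::chilbert lop" and B :: "'a set"
  assumes self_adjoint: "self_adjoint H"
    and B: "csubspace B" "B \<subseteq> dom H" "dense_set B"
    and core_graph: "closure (graph_op (H |` B)) = graph_op H"
    and symmetric: "symmetric_op X"
    and B_dom_X: "B \<subseteq> dom X" "\<forall>x\<in>B. app X x \<in> dom X"
    and square: "(X \<circ>\<^sub>m X) |` B = H |` B"
begin

lemma X_linear: "linear_op X" and X_hermitian: "hermitian_op X" and X_closable: "closable X"
  using symmetric closable_if_hermitian by (auto simp: symmetric_op_iff)

lemma restrict_linear: "linear_op (X |` B)"
  by (rule linear_op_restrict[OF X_linear B(1) B_dom_X(1)])

lemma restrict_hermitian: "hermitian_op (X |` B)"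
  by (rule hermitian_op_restrict[OF X_hermitian])

lemma restrict_dense: "dense_set (dom (X |` B))"
  using B(3) B_dom_X(1) by (simp add: Int_absorb1)

lemma restrict_closable: "closable (X |` B)"
  by (rule closable_if_hermitian[OF restrict_dense restrict_hermitian])

lemma closure_restrict_le: "closure_op (X |` B) \<subseteq>\<^sub>m closure_op X"
  by (rule closure_op_mono[OF restrict_linear restrict_closable X_linear X_closable restrict_map_le])

lemma X_square_on_B:
  assumes "b \<in> B"
  shows "app X (app X b) = app H b"
proof -
  have "(X \<circ>\<^sub>m X) b = H b" using fun_cong[OF square, of b] assms by simp
  with assms B_dom_X(1) B(2) show ?thesis
    by (auto simp: map_comp_def app_def split: option.splits)
qed

lemma norm_X_le:
  assumes b: "b \<in> B"
  shows "norm (app X b) \<le> norm (app H b + \<i> *\<^sub>C b)"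
proof (rule power2_le_imp_le)
  have "b \<in> dom X" "app X b \<in> dom X" using b B_dom_X by auto
  then have "cinner (app X b) (app X b) = cinner b (app H b)"
    using hermitian_opD[OF X_hermitian] X_square_on_B[OF b] by simp
  then have "(norm (app X b))\<^sup>2 = Re (cinner b (app H b))"
    using Re_cinner_self[of "app X b"] by simp
  also have "\<dots> \<le> norm b * norm (app H b)"
    using cmod_cinner_le[of b "app H b"] abs_Re_le_cmod[of "cinner b (app H b)"] by linarith
  also have "\<dots> \<le> (norm (app H b))\<^sup>2 + (norm b)\<^sup>2"
    using sum_squares_bound[of "norm b" "norm (app H b)"]
      mult_nonneg_nonneg[OF norm_ge_zero norm_ge_zero, of b "app H b"] by linarith
  also have "\<dots> = (norm (app H b + \<i> *\<^sub>C b))\<^sup>2"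
    using norm_shift_hermitian[OF self_adjoint_hermitian[OF self_adjoint] subsetD[OF B(2) b], of \<i>]
    by simp
  finally show "(norm (app X b))\<^sup>2 \<le> (norm (app H b + \<i> *\<^sub>C b))\<^sup>2" .
qed simp

lemma closure_restrict_square:
  assumes psi: "\<psi> \<in> dom H"
  obtains v where "closure_op (X |` B) \<psi> = Some v" and "closure_op X v = Some (app H \<psi>)"
proof -
  have "(\<psi>, app H \<psi>) \<in> closure (graph_op (H |` B))"
    using core_graph Some_app[OF psi] by simp
  then obtain b where "\<And>n. b n \<in> dom (H |` B)" and b: "b \<longlonglongrightarrow> \<psi>"
    and Hb': "(\<lambda>n. app (H |` B) (b n)) \<longlonglongrightarrow> app H \<psi>"
    unfolding closure_graph_op_iff by blast
  then have bB: "\<And>n. b n \<in> B" by auto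
  then have Hb: "(\<lambda>n. app H (b n)) \<longlonglongrightarrow> app H \<psi>" using Hb' by (simp add: app_def)
  have Cauchy: "Cauchy (\<lambda>n. app H (b n) + \<i> *\<^sub>C b n)"
    by (rule LIMSEQ_imp_Cauchy[OF tendsto_add[OF Hb tendsto_scaleC[OF b]]])
  have le: "dist (app X (b m)) (app X (b n)) \<le>
      dist (app H (b m) + \<i> *\<^sub>C b m) (app H (b n) + \<i> *\<^sub>C b n)" for m n
  proof -
    have d: "b m - b n \<in> B" by (rule csubspace_diff[OF B(1) bB bB])
    have "app X (b m) - app X (b n) = app X (b m - b n)"
      using B_dom_X(1) bB by (intro linear_op_diff[OF X_linear, symmetric]) auto
    moreover have "app H (b m) + \<i> *\<^sub>C b m - (app H (b n) + \<i> *\<^sub>C b n) =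
        app H (b m - b n) + \<i> *\<^sub>C (b m - b n)"
      using B(2) bB by (simp add: linear_op_diff[OF self_adjoint_linear[OF self_adjoint]]
          scaleC_diff_right subsetD)
    ultimately show ?thesis using norm_X_le[OF d] by (simp add: dist_norm)
  qed
  have "Cauchy (\<lambda>n. app X (b n))" by (rule Cauchy_if_dist_le[OF le Cauchy])
  then obtain v where v: "(\<lambda>n. app X (b n)) \<longlonglongrightarrow> v"
    using Cauchy_convergent_iff convergent_def by blast
  have "(\<psi>, v) \<in> closure (graph_op (X |` B))"
    unfolding closure_graph_op_iff using bB B_dom_X(1) b v
    by (intro exI[of _ b]) (auto simp: app_def)
  moreover have "(v, app H \<psi>) \<in> closure (graph_op X)"
    unfolding closure_graph_op_iff using bB B_dom_X(2) X_square_on_B Hb v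
    by (intro exI[of _ "\<lambda>n. app X (b n)"]) simp
  ultimately show thesis
    using that closure_op_eq_Some_iff[OF restrict_linear restrict_closable]
      closure_op_eq_Some_iff[OF X_linear X_closable] by blast
qed

lemma closure_X_square:
  assumes "\<psi> \<in> dom H"
  obtains v where "closure_op X \<psi> = Some v" and "closure_op X v = Some (app H \<psi>)"
  using closure_restrict_square[OF assms] map_le_Some[OF closure_restrict_le] by blast

lemma H_nonneg: "nonneg_op H"
  unfolding nonneg_op_def
proof
  fix \<psi> assume psi: "\<psi> \<in> dom H"
  obtain v where v: "closure_op X \<psi> = Some v" "closure_op X v = Some (app H \<psi>)"
    using closure_X_square[OF psi] by blast
  have "cinner \<psi> (app H \<psi>) = cinner (app (closure_op X) \<psi>) v"
    using hermitian_opD[OF closure_op_hermitian[OF X_linear X_closable X_hermitian], of \<psi> v] v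
    by (simp add: app_eqI domI)
  also have "\<dots> = of_real ((norm v)\<^sup>2)" using v by (simp add: app_eqI cinner_self)
  finally show "cinner \<psi> (app H \<psi>) \<in> \<real> \<and> 0 \<le> Re (cinner \<psi> (app H \<psi>))" by simp
qed

lemma dom_H_subset: "dom H \<subseteq> dom (closure_op X)"
  using closure_X_square by blast

text \<open>Write \<phi> = (H + 1) \<psi> = (Xc - c) \<eta> with \<eta> = (Xc + c) \<psi>, where Xc is the closure
  of X; \<eta> lies in the closure of the range of X on B shifted by c, so \<eta> is orthogonal to
  (Xc - c) \<eta>, which forces \<eta> = 0 because Xc is hermitian and c is not real.\<close>
lemma range_shift_orthogonal_trivial:
  assumes c: "c = \<i> \<or> c = - \<i>" and orth: "\<forall>m\<in>range_shift (X |` B) c. cinner m \<phi> = 0"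
  shows "\<phi> = 0"
proof -
  let ?Xc = "closure_op X"
  note linXc = closure_op_linear[OF X_linear X_closable]
  obtain \<psi> where psi: "\<psi> \<in> dom H" "app H \<psi> + \<psi> = \<phi>"
    using self_adjoint_nonneg_plus_id_surj[OF self_adjoint H_nonneg] by blast
  obtain v where Cv: "closure_op (X |` B) \<psi> = Some v" and Xv: "?Xc v = Some (app H \<psi>)"
    using closure_restrict_square[OF psi(1)] by blast
  have Xpsi: "?Xc \<psi> = Some v" by (rule map_le_Some[OF closure_restrict_le Cv])
  define \<eta> where "\<eta> = v + c *\<^sub>C \<psi>"
  have "\<eta> \<in> closure (range_shift (X |` B) c)"
    unfolding \<eta>_def using Cv closure_graph_in_closure_range_shift
      closure_op_eq_Some_iff[OF restrict_linear restrict_closable] by blast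
  then have "cinner \<eta> \<phi> = 0" by (rule orthogonal_closure[OF orth])
  moreover have \<eta>: "\<eta> \<in> dom ?Xc" "app ?Xc \<eta> = app H \<psi> + c *\<^sub>C v"
    using Xv Xpsi csubspace_add[OF linear_op_csubspace[OF linXc]]
      csubspace_scaleC[OF linear_op_csubspace[OF linXc]]
    by (auto simp: \<eta>_def linear_op_add[OF linXc] linear_op_scaleC[OF linXc] app_eqI domI)
  moreover have "c * c = -1" using c by auto
  then have "\<phi> = app ?Xc \<eta> - c *\<^sub>C \<eta>"
    using \<eta>(2) psi(2) by (simp add: \<eta>_def scaleC_add_right scaleC_scaleC scaleC_minus_left scaleC_one)
  ultimately have "cinner \<eta> (app ?Xc \<eta> - c *\<^sub>C \<eta>) = 0" by simp
  moreover have "Im c \<noteq> 0" using c by auto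
  ultimately have "\<eta> = 0"
    using hermitian_shift_orthogonal_eq_0[OF closure_op_hermitian[OF X_linear X_closable X_hermitian]
        \<eta>(1)] by blast
  then show ?thesis
    using \<open>\<phi> = app ?Xc \<eta> - c *\<^sub>C \<eta>\<close> linear_op_zero[OF linXc] by simp
qed

lemma ess_self_adjoint_restrict: "ess_self_adjoint (X |` B)"
proof (rule ess_self_adjoint_if_dense_ranges[OF restrict_linear restrict_dense restrict_hermitian])
  show "dense_set (range_shift (X |` B) \<i>)"
    by (rule dense_csubspace_if_orthogonal_trivial[OF csubspace_range_shift[OF restrict_linear]],
        rule range_shift_orthogonal_trivial) simp_all
  show "dense_set (range_shift (X |` B) (- \<i>))"
    by (rule dense_csubspace_if_orthogonal_trivial[OF csubspace_range_shift[OF restrict_linear]],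
        rule range_shift_orthogonal_trivial) simp_all
qed

lemma closure_restrict_eq: "closure_op (X |` B) = closure_op X"
  using self_adjoint_hermitian_extension_eq[OF _ closure_op_hermitian[OF X_linear X_closable X_hermitian]
      closure_restrict_le] ess_self_adjoint_restrict by (simp add: ess_self_adjoint_def)

lemma closure_square_eq: "closure_op X \<circ>\<^sub>m closure_op X = H"
proof (rule self_adjoint_hermitian_extension_eq[OF self_adjoint])
  show "hermitian_op (closure_op X \<circ>\<^sub>m closure_op X)"
    by (intro hermitian_op_map_comp_self closure_op_hermitian X_linear X_closable X_hermitian)
  show "H \<subseteq>\<^sub>m closure_op X \<circ>\<^sub>m closure_op X"
    unfolding map_le_def
  proof
    fix \<psi> assume psi: "\<psi> \<in> dom H"
    obtain v where "closure_op X \<psi> = Some v" "closure_op X v = Some (app H \<psi>)"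
      using closure_X_square[OF psi] by blast
    with Some_app[OF psi] show "H \<psi> = (closure_op X \<circ>\<^sub>m closure_op X) \<psi>" by simp
  qed
qed

end

theorem lemma1p2p1:
  fixes H :: "'a::chilbert lop" and U :: "real \<Rightarrow> 'a \<Rightarrow> 'a" and B :: "'a set"
  assumes "self_adjoint H"
    and "unitary_group_of H U"
    and "csubspace B" and "B \<subseteq> dom H" and "dense_set B"
    and "(\<forall>t. U t ` B \<subseteq> B) \<or>
         ((\<forall>x\<in>B. app H x \<in> B) \<and>
          (\<exists>S\<subseteq>B. dense_set S \<and> (\<forall>x\<in>S. analytic_vector H x)))"
  shows "is_core H B \<and>
    (\<forall>X::'a lop. symmetric_op X \<and> B \<subseteq> dom X \<and> (\<forall>x\<in>B. app X x \<in> dom X) \<and>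
        (X \<circ>\<^sub>m X) |` B = H |` B \<longrightarrow>
      ess_self_adjoint (X |` B) \<and>
      closure_op (X |` B) = closure_op X \<and>
      closure_op X \<circ>\<^sub>m closure_op X = H \<and>
      nonneg_op H \<and>
      dom H \<subseteq> dom (closure_op X))"
proof -
  interpret unitary_group H U by (rule unitary_group.intro[OF assms(2)])
  have "\<phi> = 0" if orth: "\<forall>b\<in>B. cinner (app H b + \<i> *\<^sub>C b) \<phi> = 0" for \<phi>
    using assms(6) orthogonal_shift_eq_0_if_invariant[OF assms(4,5) _ orth]
      orthogonal_shift_eq_0_if_analytic[OF assms(4) _ _ _ _ orth] by blast
  then have core_graph: "closure (graph_op (H |` B)) = graph_op H"
    by (intro closure_graph_restrict_eq_if_dense_range[OF assms(1,3,4)]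
        dense_range_shift_restrict[OF self_adjoint_linear[OF assms(1)] assms(3,4)])
  have "is_core H B"
    using assms(4) closure_op_eq_if_closure_graph_eq[OF core_graph] by (simp add: is_core_def)
  moreover have "ess_self_adjoint (X |` B) \<and> closure_op (X |` B) = closure_op X \<and>
      closure_op X \<circ>\<^sub>m closure_op X = H \<and> nonneg_op H \<and> dom H \<subseteq> dom (closure_op X)"
    if "symmetric_op X \<and> B \<subseteq> dom X \<and> (\<forall>x\<in>B. app X x \<in> dom X) \<and> (X \<circ>\<^sub>m X) |` B = H |` B"
    for X :: "'a lop"
  proof -
    interpret square_root_on_core H X B
      using assms(1,3,4,5) core_graph that by unfold_locales auto
    show ?thesis
      using ess_self_adjoint_restrict closure_restrict_eq closure_square_eq H_nonneg dom_H_subset by blast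
  qed
  ultimately show ?thesis by blast
qed

end
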